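(* Let $G>0$ and let $W:GL_+(3,\mathbb{R})\to\mathbb{R}$ be a strain-energy function as described in the context (continuously differentiable, objective, isotropic, homogeneous of degree $-1$), and let $g:(0,\infty)\to\mathbb{R}$ be the associated function defined in the context. Assume furthermore that $g$ is $C^3$ and that \[ g''(1) \ge 50\Big(50 + \sup_{|y-1|\le \frac12} |g'''(y)|\Big). \] Then there exists $\mu_0>0$ such that for every $\mu\in[-\mu_0,\mu_0]$ there exist $\bar\rho>0$ and a classical solution $\varphi:[0,1]\to[0,\infty)$, twice differentiable with $\varphi(0)=\varphi''(0)=0$ and $\varphi'>0$ on $[0,1]$, of the system \[ \begin{cases} \displaystyle \frac{\varphi^2}{R^5}\,\partial_R\Big(\frac{R^4}{\varphi}\,g'(y)\Big) + \frac{\varphi}{R^2}\,g(y) = \Big(\frac{4\pi}{3}G\bar\rho + \mu\,\lambda^3\Big)\bar\rho^{-\frac13}\,\varphi, \\[2mm] g'(y(1)) = 0,\qquad \varphi(1)=1, \end{cases} \] where \[ \lambda(R)=\begin{cases}\varphi(R)/R, & R\in(0,1],\\ \varphi'(0), & R=0,\end{cases}\qquad y(R)=\frac{\varphi'(R)}{\lambda(R)},\quad R\in[0,1]. \]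
   Context: Setting: $G>0$ is Newton's gravitational constant, $\mathcal{B}=\{X\in\mathbb{R}^3:|X|\le1\}$ is the reference domain, and $\bar\rho>0$ is a (constant) reference density. $GL_+(3,\mathbb{R})$ denotes the real $3\times3$ matrices with positive determinant and $SO(3,\mathbb{R})$ the rotations. The strain-energy function $W:GL_+(3,\mathbb{R})\to\mathbb{R}$ is continuously differentiable and satisfies: objectivity $W(OF)=W(F)$ and isotropy $W(FO)=W(F)$ for all $F\in GL_+(3,\mathbb{R})$, $O\in SO(3,\mathbb{R})$; homogeneity of degree $-1$: $W(\sigma F)=\sigma^{-1}W(F)$ for $\sigma>0$; and the normalization $W(I)=\bar\rho^{1/3}$. For $y>0$ and a unit vector $\omega\in\mathbb{S}^2$, the quantity $W(I+(y-1)\,\omega\otimes\omega)$ is independent of $\omega$ (by objectivity and isotropy), and one defines $g(y)=\bar\rho^{-1/3}\,W(I+(y-1)\,\omega\otimes\omega)$. In this setting (with the Piola–Kirchhoff stress $\bar\rho\,\partial W/\partial F$ continuously differentiable in the material variable), $g(1)=1$ and $g'(1)=-\tfrac13$. The displayed system is the equation for the spatial profile $\varphi$ of separable (homologous) spherically symmetric solutions $x(t,X)=q(t)\varphi(|X|)\,X/|X|$ of the equations of motion of a self-gravitating hyperelastic body with traction-free boundary, with $q$ solving $q^2\ddot q=\mu$, $q(0)=1$. *)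

theory Defs
  imports "HOL-Analysis.Analysis"
begin

definition GLp3 :: "(real^3^3) set" where
  "GLp3 = {F. det F > 0}"

definition SO3 :: "(real^3^3) set" where
  "SO3 = {Q. orthogonal_matrix Q \<and> det Q = 1}"

definition dyad :: "real^3 \<Rightarrow> real^3^3" where
  "dyad w = (\<chi> i j. w $ i * w $ j)"

text \<open>The uniaxial profile g(y) = W(I + (y-1) omega (x) omega) for the (density-normalised)
  strain energy W with W(I) = 1, evaluated at the fixed unit vector omega = e_1.\<close>
definition uniaxial :: "(real^3^3 \<Rightarrow> real) \<Rightarrow> real \<Rightarrow> real" where
  "uniaxial W y = W (mat 1 + (y - 1) *\<^sub>R dyad (axis 1 1))"

end

theory Submission
  imports Defs
begin

(* Write \<phi>(R) = R \<lambda>(R) with \<lambda>(R) = exp (- \<integral>\<^sub>R\<^sup>1 s z(s) ds); then y = 1 + R\<^sup>2 z and,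
  with c = \<kappa> \<rho>^(2/3) and m = \<mu> \<rho>^(-1/3), the profile equation turns into the fixed point
  problem z = avg4 K for a source K depending on z, c, m, where avg4 K R = R^-5 \<integral>\<^sub>0\<^sup>R r^4 K(r) dr.
  Because a = g''(1) is large, K \<approx> c / a and the fixed point map is a contraction on
  the ball of radius 1/a of bounded continuous functions, with fixed point depending
  continuously on (c, m). The traction condition g'(1 + z(1)) = 0 has a root near 1/(3a),
  while z(1) \<approx> c/(5a) sweeps across it as c runs through [1, 3]; the intermediate value
  theorem picks c, and then \<rho> = (c/\<kappa>)^(3/2).
  The normalisations g(1) = 1 and g'(1) = -1/3 come from W(I) = 1, from homogeneity (the
  derivative of W at I in direction I is -1) and from isotropy (conjugating by a rotation that
  permutes the axes shows that the three uniaxial directions e\<^sub>i \<otimes> e\<^sub>i contribute equally). *)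

lemma abs_diff_le_by_deriv_bound:
  fixes f f' :: "real \<Rightarrow> real"
  assumes "\<And>t. t \<in> {min x y..max x y} \<Longrightarrow> (f has_real_derivative f' t) (at t)"
    and "\<And>t. t \<in> {min x y..max x y} \<Longrightarrow> \<bar>f' t\<bar> \<le> B"
  shows "\<bar>f x - f y\<bar> \<le> B * \<bar>x - y\<bar>"
proof -
  have "norm (f x - f y) \<le> B * norm (x - y)"
    by (rule field_differentiable_bound[where f' = f' and S = "{min x y..max x y}"])
       (use assms in \<open>auto intro: has_field_derivative_at_within\<close>)
  then show ?thesis by simp
qed

lemma DERIV_shift_left:
  "(f has_real_derivative D) (at (c + t)) \<Longrightarrow> ((\<lambda>s. f (c + s)) has_real_derivative D) (at t)"
  using DERIV_shift[of f D t c] by (simp add: add.commute)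

lemma abs_exp_diff_le:
  fixes x y :: real
  assumes "\<bar>x\<bar> \<le> 1/2" "\<bar>y\<bar> \<le> 1/2"
  shows "\<bar>exp x - exp y\<bar> \<le> 2 * \<bar>x - y\<bar>"
proof (rule abs_diff_le_by_deriv_bound[OF DERIV_exp])
  fix t assume "t \<in> {min x y..max x y}"
  then have "\<bar>t\<bar> \<le> 1/2" using assms by auto
  then show "\<bar>exp t\<bar> \<le> 2" using exp_bound_lemma[of t] by simp
qed

lemma abs_integral_id_mult_le:
  fixes w :: "real \<Rightarrow> real"
  assumes w: "continuous_on {0..1} w" and bound: "\<And>s. s \<in> {0..1} \<Longrightarrow> \<bar>w s\<bar> \<le> D"
    and r: "r \<in> {0..1}"
  shows "\<bar>integral {0..r} (\<lambda>s. s * w s)\<bar> \<le> D"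
proof -
  have D: "D \<ge> 0" using bound[of 0] by auto
  have "norm (integral {0..r} (\<lambda>s. s * w s)) \<le> integral {0..r} (\<lambda>_. D)"
  proof (rule integral_norm_bound_integral)
    show "(\<lambda>s. s * w s) integrable_on {0..r}"
      using w r by (auto intro!: integrable_continuous_interval continuous_intros
          intro: continuous_on_subset)
    fix s assume "s \<in> {0..r}"
    then have "\<bar>s\<bar> * \<bar>w s\<bar> \<le> 1 * D" using bound r by (intro mult_mono) auto
    then show "norm (s * w s) \<le> D" by (simp add: abs_mult)
  qed auto
  also have "\<dots> \<le> D" using r D by (simp add: mult_left_le_one_le)
  finally show ?thesis by simp
qed

section \<open>The weighted average\<close>

definition avg4 :: "(real \<Rightarrow> real) \<Rightarrow> real \<Rightarrow> real" where
  "avg4 K R = (if R = 0 then K 0 / 5 else integral {0..R} (\<lambda>r. r^4 * K r) / R^5)"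

lemma has_integral_power4:
  fixes R :: real
  assumes "0 \<le> R"
  shows "((\<lambda>r. r^4) has_integral R^5/5) {0..R}"
proof -
  have "((\<lambda>r::real. r^4) has_integral ((\<lambda>r. r^5/5) R - (\<lambda>r. r^5/5) 0)) {0..R}"
    by (rule fundamental_theorem_of_calculus[OF assms])
       (auto intro!: derivative_eq_intros simp: has_real_derivative_iff_has_vector_derivative[symmetric])
  then show ?thesis by simp
qed

lemma integrable_power4_mult:
  fixes K :: "real \<Rightarrow> real"
  assumes "continuous_on {0..R} K"
  shows "(\<lambda>r. r^4 * K r) integrable_on {0..R}"
  by (rule integrable_continuous_interval) (auto intro!: continuous_intros assms)

lemma avg4_bounds:
  assumes K: "continuous_on {0..R} K" and R: "0 \<le> R"
    and bounds: "\<And>r. r \<in> {0..R} \<Longrightarrow> lo \<le> K r \<and> K r \<le> hi"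
  shows "lo/5 \<le> avg4 K R \<and> avg4 K R \<le> hi/5"
proof (cases "R = 0")
  case True
  then show ?thesis using bounds[of 0] by (auto simp: avg4_def)
next
  case False
  then have "R > 0" using R by auto
  have int: "(\<lambda>r. r^4 * K r) integrable_on {0..R}" by (rule integrable_power4_mult[OF K])
  have const: "((\<lambda>r. r^4 * C) has_integral R^5/5 * C) {0..R}" for C
    using has_integral_mult_left[OF has_integral_power4[OF R]] by simp
  have "R^5/5 * lo \<le> integral {0..R} (\<lambda>r. r^4 * K r)"
    by (rule has_integral_le[OF const integrable_integral[OF int]])
       (use bounds in \<open>auto intro: mult_left_mono\<close>)
  moreover have "integral {0..R} (\<lambda>r. r^4 * K r) \<le> R^5/5 * hi"
    by (rule has_integral_le[OF integrable_integral[OF int] const])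
       (use bounds in \<open>auto intro: mult_left_mono\<close>)
  ultimately show ?thesis using \<open>R > 0\<close> by (auto simp: avg4_def divide_simps mult.commute)
qed

lemma abs_avg4_le:
  assumes "continuous_on {0..R} K" "0 \<le> R" "\<And>r. r \<in> {0..R} \<Longrightarrow> \<bar>K r\<bar> \<le> B"
  shows "\<bar>avg4 K R\<bar> \<le> B/5"
  using avg4_bounds[OF assms(1,2), of "-B" B] assms(3) by (force simp: abs_le_iff)

lemma avg4_diff:
  assumes "continuous_on {0..R} K\<^sub>1" "continuous_on {0..R} K\<^sub>2"
  shows "avg4 K\<^sub>1 R - avg4 K\<^sub>2 R = avg4 (\<lambda>r. K\<^sub>1 r - K\<^sub>2 r) R"
proof -
  have "integral {0..R} (\<lambda>r. r^4 * (K\<^sub>1 r - K\<^sub>2 r))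
      = integral {0..R} (\<lambda>r. r^4 * K\<^sub>1 r) - integral {0..R} (\<lambda>r. r^4 * K\<^sub>2 r)"
    using integral_diff[OF integrable_power4_mult[OF assms(1)] integrable_power4_mult[OF assms(2)]]
    by (simp add: algebra_simps)
  then show ?thesis by (simp add: avg4_def diff_divide_distrib)
qed

lemma continuous_within_avg4_0:
  assumes K: "continuous_on {0..1} K"
  shows "continuous (at 0 within {0..1}) (avg4 K)"
  unfolding continuous_within_eps_delta
proof (intro allI impI)
  fix e :: real assume "e > 0"
  then obtain d where "d > 0" and d: "\<And>r. r \<in> {0..1} \<Longrightarrow> dist r 0 < d \<Longrightarrow> dist (K r) (K 0) < e"
    using K unfolding continuous_on_iff by (metis atLeastAtMost_iff order_refl zero_le_one)
  have "dist (avg4 K R) (avg4 K 0) < e" if R: "R \<in> {0..1}" "dist R 0 < d" for R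
  proof -
    have "continuous_on {0..R} K" using K R by (auto intro: continuous_on_subset)
    then have "(K 0 - e)/5 \<le> avg4 K R \<and> avg4 K R \<le> (K 0 + e)/5"
    proof (rule avg4_bounds)
      fix r assume "r \<in> {0..R}"
      then show "K 0 - e \<le> K r \<and> K r \<le> K 0 + e" using d[of r] R by (auto simp: dist_real_def)
    qed (use R in auto)
    then show ?thesis using \<open>e > 0\<close> by (auto simp: avg4_def dist_real_def)
  qed
  then show "\<exists>d>0. \<forall>R\<in>{0..1}. dist R 0 < d \<longrightarrow> dist (avg4 K R) (avg4 K 0) < e"
    using \<open>d > 0\<close> by blast
qed

lemma continuous_on_avg4:
  assumes K: "continuous_on {0..1} K"
  shows "continuous_on {0..1} (avg4 K)"
  unfolding continuous_on_eq_continuous_within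
proof
  fix x :: real assume x: "x \<in> {0..1}"
  show "continuous (at x within {0..1}) (avg4 K)"
  proof (cases "x = 0")
    case True
    then show ?thesis using continuous_within_avg4_0[OF K] by simp
  next
    case False
    then have "x > 0" using x by auto
    let ?I = "\<lambda>R. integral {0..R} (\<lambda>r. r^4 * K r)"
    have "continuous_on {0..1} ?I"
      by (rule indefinite_integral_continuous_1[OF integrable_power4_mult[OF K]])
    then have "continuous (at x within {0..1}) (\<lambda>R. ?I R / R^5)"
      using x \<open>x > 0\<close> by (auto intro!: continuous_intros simp: continuous_on_eq_continuous_within)
    then show ?thesis
      by (rule continuous_transform_within[OF _ \<open>x > 0\<close> x]) (auto simp: avg4_def dist_real_def)
  qed
qed

lemma has_real_derivative_sq_avg4:
  assumes K: "continuous_on {0..1} K" and R: "R \<in> {0..1}"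
  shows "((\<lambda>r. r^2 * avg4 K r) has_real_derivative R * (K R - 3 * avg4 K R)) (at R within {0..1})"
proof (cases "R = 0")
  case True
  have "((\<lambda>r. r * avg4 K r) \<longlongrightarrow> 0 * avg4 K 0) (at 0 within {0..1})"
    using continuous_on_avg4[OF K]
    by (intro tendsto_intros) (simp add: continuous_on_eq_continuous_within continuous_within)
  moreover have "\<forall>\<^sub>F r in at 0 within {0..1}. r * avg4 K r = (r^2 * avg4 K r - 0^2 * avg4 K 0) / (r - 0)"
    by (auto simp: eventually_at_filter power2_eq_square)
  ultimately have "((\<lambda>r. (r^2 * avg4 K r - 0^2 * avg4 K 0) / (r - 0)) \<longlongrightarrow> 0) (at 0 within {0..1})"
    using tendsto_cong by fastforce
  then show ?thesis unfolding True by (simp add: has_field_derivative_iff)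
next
  case False
  then have "R > 0" using R by auto
  let ?I = "\<lambda>R. integral {0..R} (\<lambda>r. r^4 * K r)"
  have "(?I has_real_derivative R^4 * K R) (at R within {0..1})"
    by (rule integral_has_real_derivative[OF _ R]) (intro continuous_intros K)
  then have "((\<lambda>r. ?I r / r^3) has_real_derivative
      (R^4 * K R * R^3 - ?I R * (3 * R^2)) / (R^3 * R^3)) (at R within {0..1})"
    using \<open>R > 0\<close> by (auto intro!: derivative_eq_intros)
  moreover have "(R^4 * K R * R^3 - ?I R * (3 * R^2)) / (R^3 * R^3) = R * (K R - 3 * avg4 K R)"
    using \<open>R > 0\<close> by (simp add: avg4_def field_simps power_add[symmetric] eval_nat_numeral)
  ultimately have "((\<lambda>r. ?I r / r^3) has_real_derivative R * (K R - 3 * avg4 K R)) (at R within {0..1})"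
    by simp
  then show ?thesis
  proof (rule has_field_derivative_transform_within[OF _ \<open>R > 0\<close> R])
    fix r assume "r \<in> {0..1}" "dist r R < R"
    then have "r > 0" by (auto simp: dist_real_def)
    then show "?I r / r^3 = r^2 * avg4 K r" by (simp add: avg4_def field_simps eval_nat_numeral)
  qed
qed

section \<open>The logarithmic stretch\<close>

definition log_stretch :: "(real \<Rightarrow> real) \<Rightarrow> real \<Rightarrow> real" where
  "log_stretch z r = integral {0..r} (\<lambda>s. s * z s) - integral {0..1} (\<lambda>s. s * z s)"

lemma log_stretch_1 [simp]: "log_stretch z 1 = 0"
  by (simp add: log_stretch_def)

lemma continuous_on_log_stretch:
  assumes "continuous_on {0..1} z"
  shows "continuous_on {0..1} (log_stretch z)"
proof -
  have "(\<lambda>s. s * z s) integrable_on {0..1}"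
    by (rule integrable_continuous_interval) (auto intro!: continuous_intros assms)
  from indefinite_integral_continuous_1[OF this] show ?thesis
    unfolding log_stretch_def[abs_def] by (intro continuous_intros)
qed

lemma has_real_derivative_log_stretch:
  assumes "continuous_on {0..1} z" "R \<in> {0..1}"
  shows "(log_stretch z has_real_derivative R * z R) (at R within {0..1})"
proof -
  have "((\<lambda>r. integral {0..r} (\<lambda>s. s * z s)) has_real_derivative R * z R) (at R within {0..1})"
    by (rule integral_has_real_derivative[OF _ assms(2)]) (intro continuous_intros assms(1))
  then show ?thesis unfolding log_stretch_def[abs_def] by (auto intro!: derivative_eq_intros)
qed

lemma abs_log_stretch_le:
  assumes "continuous_on {0..1} z" "\<And>s. s \<in> {0..1} \<Longrightarrow> \<bar>z s\<bar> \<le> D" "r \<in> {0..1}"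
  shows "\<bar>log_stretch z r\<bar> \<le> 2 * D"
  using abs_integral_id_mult_le[OF assms] abs_integral_id_mult_le[OF assms(1,2), of 1]
  unfolding log_stretch_def by auto

lemma log_stretch_diff:
  assumes "continuous_on {0..1} z\<^sub>1" "continuous_on {0..1} z\<^sub>2" "r \<in> {0..1}"
  shows "log_stretch z\<^sub>1 r - log_stretch z\<^sub>2 r = log_stretch (\<lambda>s. z\<^sub>1 s - z\<^sub>2 s) r"
proof -
  have int: "(\<lambda>s. s * z s) integrable_on {0..t}"
    if "continuous_on {0..1} z" "t \<in> {0..1}" for z :: "real \<Rightarrow> real" and t
    using that by (auto intro!: integrable_continuous_interval continuous_intros
        intro: continuous_on_subset)
  have "integral {0..t} (\<lambda>s. s * (z\<^sub>1 s - z\<^sub>2 s))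
      = integral {0..t} (\<lambda>s. s * z\<^sub>1 s) - integral {0..t} (\<lambda>s. s * z\<^sub>2 s)" if "t \<in> {0..1}" for t
    using integral_diff[OF int[OF assms(1) that] int[OF assms(2) that]] by (simp add: algebra_simps)
  then show ?thesis
    unfolding log_stretch_def using assms(3) by simp
qed

definition stretch :: "(real \<Rightarrow> real) \<Rightarrow> real \<Rightarrow> real" where
  "stretch z r = exp (log_stretch z r)"

lemma stretch_pos: "0 < stretch z r"
  by (simp add: stretch_def)

lemma stretch_1 [simp]: "stretch z 1 = 1"
  by (simp add: stretch_def)

lemma stretch_cube: "stretch z r ^ 3 = exp (3 * log_stretch z r)"
  using exp_of_nat_mult[of 3 "log_stretch z r"] by (simp add: stretch_def)

lemma has_real_derivative_stretch:
  assumes "continuous_on {0..1} z" "R \<in> {0..1}"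
  shows "(stretch z has_real_derivative stretch z R * (R * z R)) (at R within {0..1})"
  using DERIV_chain2[OF DERIV_exp has_real_derivative_log_stretch[OF assms]]
  unfolding stretch_def[abs_def] by simp

section \<open>The profile equation\<close>

definition solves_profile :: "(real \<Rightarrow> real) \<Rightarrow> (real \<Rightarrow> real) \<Rightarrow>
    (real \<Rightarrow> real) \<Rightarrow> (real \<Rightarrow> real) \<Rightarrow> (real \<Rightarrow> real) \<Rightarrow> bool" where
  "solves_profile g F \<phi> \<phi>' \<phi>'' \<longleftrightarrow>
       (\<forall>R\<in>{0..1}. \<phi> R \<ge> 0)
     \<and> (\<forall>R\<in>{0..1}. (\<phi> has_real_derivative \<phi>' R) (at R within {0..1}))
     \<and> (\<forall>R\<in>{0..1}. (\<phi>' has_real_derivative \<phi>'' R) (at R within {0..1}))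
     \<and> \<phi> 0 = 0 \<and> \<phi>'' 0 = 0
     \<and> (\<forall>R\<in>{0..1}. \<phi>' R > 0)
     \<and> (let lam = (\<lambda>R. if R = 0 then \<phi>' 0 else \<phi> R / R);
            yy = (\<lambda>R. \<phi>' R / lam R)
        in (\<forall>R\<in>{0<..1}. \<exists>D.
              ((\<lambda>r. r ^ 4 / \<phi> r * deriv g (yy r)) has_real_derivative D) (at R within {0..1})
            \<and> (\<phi> R)\<^sup>2 / R ^ 5 * D + \<phi> R / R\<^sup>2 * g (yy R) = F (lam R) * \<phi> R)
           \<and> deriv g (yy 1) = 0)
     \<and> \<phi> 1 = 1"

text \<open>The profile equation for \<open>\<phi> = R L\<close> written out by the chain rule, where \<open>g0, g1, g2\<close>
  stand for \<open>g, g', g''\<close> at \<open>y = 1 + R\<^sup>2 z\<close>.\<close>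

lemma profile_identity:
  fixes R L z K g0 g1 g2 c :: real
  assumes "R \<noteq> 0" "L \<noteq> 0" "g2 \<noteq> 0"
    and "K = c / g2 + (3 * (R\<^sup>2 * z) * g2 - (3 - R\<^sup>2 * z) * g1 - g0) / g2 / R\<^sup>2"
  shows "(R * L)\<^sup>2 / R ^ 5 * ((3 * R\<^sup>2 * L - R ^ 3 * (L * (R * z))) / (L * L) * g1
      + g2 * (R * (K - 3 * z)) * (R ^ 3 / L)) + R * L / R\<^sup>2 * g0 = c * (R * L)"
  using assms(1-3) unfolding assms(4) by (simp add: field_simps power2_eq_square eval_nat_numeral)

lemma rescaled_coefficient:
  fixes \<kappa> s c \<mu> L :: real
  assumes "s > 0" "\<kappa> * s\<^sup>2 = c"
  shows "(\<kappa> * s ^ 3 + \<mu> * L ^ 3) * (s ^ 3) powr (-1/3) = c + \<mu> / s * L ^ 3"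
proof -
  have "(s ^ 3) powr (-1/3) = s powr (real 3 * (-1/3))"
    by (simp only: powr_realpow[symmetric, OF assms(1)] powr_powr)
  also have "\<dots> = 1 / s" using assms(1) by (simp add: powr_neg_one)
  finally show ?thesis
    using assms(1) unfolding assms(2)[symmetric]
    by (simp add: field_simps power2_eq_square eval_nat_numeral)
qed

section \<open>Profiles with large curvature at the reference state\<close>

locale stiff_profile =
  fixes g :: "real \<Rightarrow> real" and a M :: real
  assumes g_1: "g 1 = 1" and deriv_g_1: "deriv g 1 = -1/3"
    and has_deriv_g: "\<And>y. y > 0 \<Longrightarrow> (g has_real_derivative deriv g y) (at y)"
    and has_deriv_g': "\<And>y. y > 0 \<Longrightarrow> (deriv g has_real_derivative deriv (deriv g) y) (at y)"
    and has_deriv_g'':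
      "\<And>y. y > 0 \<Longrightarrow> (deriv (deriv g) has_real_derivative deriv (deriv (deriv g)) y) (at y)"
    and deriv2_g_1: "deriv (deriv g) 1 = a"
    and deriv3_g_bound: "\<And>y. y \<in> {1/2..3/2} \<Longrightarrow> \<bar>deriv (deriv (deriv g)) y\<bar> \<le> M"
    and a_large: "50 * (50 + M) \<le> a"
begin

abbreviation g' where "g' \<equiv> deriv g"
abbreviation g'' where "g'' \<equiv> deriv g'"
abbreviation g''' where "g''' \<equiv> deriv g''"

lemma M_nonneg: "0 \<le> M"
  using deriv3_g_bound[of 1] by auto

lemma a_ge: "2500 \<le> a"
  using a_large M_nonneg by simp

lemma M_le: "M \<le> a / 50"
  using a_large M_nonneg by simp

lemma inv_a_bounds: "0 < 1/a" "1/a \<le> 1/2500"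
  using a_ge by (auto simp: divide_simps)

lemma has_deriv_shifted:
  assumes "-1 < v"
  shows "((\<lambda>s. g (1 + s)) has_real_derivative g' (1 + v)) (at v)"
    and "((\<lambda>s. g' (1 + s)) has_real_derivative g'' (1 + v)) (at v)"
    and "((\<lambda>s. g'' (1 + s)) has_real_derivative g''' (1 + v)) (at v)"
  using assms by (auto intro!: DERIV_shift_left has_deriv_g has_deriv_g' has_deriv_g'')

lemma g''_near_1:
  assumes "\<bar>t\<bar> \<le> 1/2"
  shows "\<bar>g'' (1 + t) - a\<bar> \<le> M * \<bar>t\<bar>"
proof -
  have "\<bar>g'' (1 + t) - g'' (1 + 0)\<bar> \<le> M * \<bar>t - 0\<bar>"
  proof (rule abs_diff_le_by_deriv_bound)
    fix s assume "s \<in> {min t 0..max t 0}"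
    then have "\<bar>s\<bar> \<le> 1/2" using assms by auto
    then show "((\<lambda>s. g'' (1 + s)) has_real_derivative g''' (1 + s)) (at s)"
      and "\<bar>g''' (1 + s)\<bar> \<le> M"
      by (auto intro!: has_deriv_shifted deriv3_g_bound)
  qed
  then show ?thesis using deriv2_g_1 by simp
qed

lemma g'_near_1:
  assumes "\<bar>t\<bar> \<le> 1/2"
  shows "\<bar>g' (1 + t) + 1/3 - a * t\<bar> \<le> M * t\<^sup>2"
proof -
  have "\<bar>(g' (1 + t) - a * t) - (g' (1 + 0) - a * 0)\<bar> \<le> (M * \<bar>t\<bar>) * \<bar>t - 0\<bar>"
  proof (rule abs_diff_le_by_deriv_bound)
    fix s assume s: "s \<in> {min t 0..max t 0}"
    then have "\<bar>s\<bar> \<le> \<bar>t\<bar>" by auto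
    then show "((\<lambda>s. g' (1 + s) - a * s) has_real_derivative g'' (1 + s) - a) (at s)"
      using assms by (auto intro!: derivative_eq_intros has_deriv_shifted)
    have "\<bar>g'' (1 + s) - a\<bar> \<le> M * \<bar>s\<bar>" using \<open>\<bar>s\<bar> \<le> \<bar>t\<bar>\<close> assms by (intro g''_near_1) auto
    also have "\<dots> \<le> M * \<bar>t\<bar>" using \<open>\<bar>s\<bar> \<le> \<bar>t\<bar>\<close> M_nonneg by (simp add: mult_left_mono)
    finally show "\<bar>g'' (1 + s) - a\<bar> \<le> M * \<bar>t\<bar>" .
  qed
  then show ?thesis using deriv_g_1 by (simp add: power2_eq_square abs_mult)
qed

lemma g''_bounds:
  assumes "\<bar>v\<bar> \<le> 1/a"
  shows "a - 1 \<le> g'' (1 + v)" "g'' (1 + v) \<le> a + 1"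
proof -
  have "\<bar>v\<bar> \<le> 1/2" using assms inv_a_bounds by linarith
  then have "\<bar>g'' (1 + v) - a\<bar> \<le> M * \<bar>v\<bar>" by (rule g''_near_1)
  also have "\<dots> \<le> (a/50) * (1/a)" using assms M_le M_nonneg by (intro mult_mono) auto
  also have "\<dots> \<le> 1" using a_ge by simp
  finally show "a - 1 \<le> g'' (1 + v)" "g'' (1 + v) \<le> a + 1" by auto
qed

definition inv_g'' :: "real \<Rightarrow> real" where
  "inv_g'' v = 1 / g'' (1 + v)"

definition Q :: "real \<Rightarrow> real" where
  "Q v = 3 * v * g'' (1 + v) - (3 - v) * g' (1 + v) - g (1 + v)"

lemma Q_0 [simp]: "Q 0 = 0"
  by (simp add: Q_def g_1 deriv_g_1)

lemma inv_g''_bounds: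
  assumes "\<bar>v\<bar> \<le> 1/a"
  shows "1/(a + 1) \<le> inv_g'' v" "inv_g'' v \<le> 1/(a - 1)" "0 < inv_g'' v"
  using g''_bounds[OF assms] a_ge unfolding inv_g''_def by (auto simp: frac_le)

lemma has_real_derivative_inv_g'':
  assumes "\<bar>w\<bar> \<le> 1/a"
  shows "(inv_g'' has_real_derivative - g''' (1 + w) / (g'' (1 + w))\<^sup>2) (at w)"
proof -
  have "-1 < w" using assms inv_a_bounds by linarith
  moreover have "g'' (1 + w) \<noteq> 0" using g''_bounds[OF assms] a_ge by auto
  ultimately show ?thesis
    unfolding inv_g''_def[abs_def]
    by (auto intro!: derivative_eq_intros has_deriv_shifted simp: power2_eq_square)
qed

lemma abs_deriv_inv_g''_le:
  assumes "\<bar>w\<bar> \<le> 1/a"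
  shows "\<bar>- g''' (1 + w) / (g'' (1 + w))\<^sup>2\<bar> \<le> 1/a"
proof -
  have "\<bar>w\<bar> \<le> 1/2" using assms inv_a_bounds by linarith
  then have "1 + w \<in> {1/2..3/2}" by auto
  then have g''': "\<bar>g''' (1 + w)\<bar> \<le> a/50" using deriv3_g_bound M_le by fastforce
  have "(a - 1)\<^sup>2 \<le> (g'' (1 + w))\<^sup>2" using g''_bounds[OF assms] a_ge by (intro power_mono) auto
  then have "\<bar>g''' (1 + w)\<bar> / (g'' (1 + w))\<^sup>2 \<le> (a/50) / (a - 1)\<^sup>2"
    using g''' a_ge by (intro frac_le) auto
  also have "\<dots> \<le> 1/a"
  proof -
    have "(a/2) * (a/2) \<le> (a - 1) * (a - 1)" using a_ge by (intro mult_mono) auto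
    moreover have "0 \<le> (a - 1) * (a - 1)" by simp
    ultimately have "a * a / 50 \<le> (a - 1) * (a - 1)" by linarith
    then have "a * (a/50) \<le> (a - 1)\<^sup>2" by (simp add: power2_eq_square)
    then show ?thesis using a_ge by (simp add: divide_simps)
  qed
  finally show ?thesis by (simp add: abs_divide)
qed

lemma inv_g''_lipschitz:
  assumes "\<bar>v\<^sub>1\<bar> \<le> 1/a" "\<bar>v\<^sub>2\<bar> \<le> 1/a"
  shows "\<bar>inv_g'' v\<^sub>1 - inv_g'' v\<^sub>2\<bar> \<le> \<bar>v\<^sub>1 - v\<^sub>2\<bar> / a"
proof -
  have "\<bar>inv_g'' v\<^sub>1 - inv_g'' v\<^sub>2\<bar> \<le> (1/a) * \<bar>v\<^sub>1 - v\<^sub>2\<bar>"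
  proof (rule abs_diff_le_by_deriv_bound)
    fix w assume "w \<in> {min v\<^sub>1 v\<^sub>2..max v\<^sub>1 v\<^sub>2}"
    then have "\<bar>w\<bar> \<le> 1/a" using assms by auto
    then show "(inv_g'' has_real_derivative - g''' (1 + w) / (g'' (1 + w))\<^sup>2) (at w)"
      and "\<bar>- g''' (1 + w) / (g'' (1 + w))\<^sup>2\<bar> \<le> 1/a"
      by (rule has_real_derivative_inv_g'' abs_deriv_inv_g''_le)+
  qed
  then show ?thesis by simp
qed

lemma has_real_derivative_Q:
  assumes "\<bar>w\<bar> \<le> 1/a"
  shows "(Q has_real_derivative w * g'' (1 + w) + 3 * w * g''' (1 + w)) (at w)"
proof -
  have "-1 < w" using assms inv_a_bounds by linarith
  then have "(Q has_real_derivative 3 * g'' (1 + w) + 3 * w * g''' (1 + w)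
      - (- g' (1 + w) + (3 - w) * g'' (1 + w)) - g' (1 + w)) (at w)"
    unfolding Q_def[abs_def] by (auto intro!: derivative_eq_intros has_deriv_shifted)
  then show ?thesis by (simp add: algebra_simps)
qed

lemma abs_deriv_Q_le:
  assumes "\<bar>w\<bar> \<le> 1/a"
  shows "\<bar>w * g'' (1 + w) + 3 * w * g''' (1 + w)\<bar> \<le> 2 * a * \<bar>w\<bar>"
proof -
  have "\<bar>w\<bar> \<le> 1/2" using assms inv_a_bounds by linarith
  then have "1 + w \<in> {1/2..3/2}" by auto
  then have g''': "\<bar>g''' (1 + w)\<bar> \<le> a/50" using deriv3_g_bound M_le by fastforce
  have g'': "\<bar>g'' (1 + w)\<bar> \<le> a + 1" using g''_bounds[OF assms] a_ge by auto
  have "\<bar>w * g'' (1 + w) + 3 * w * g''' (1 + w)\<bar> \<le> \<bar>w\<bar> * \<bar>g'' (1 + w)\<bar> + 3 * (\<bar>w\<bar> * \<bar>g''' (1 + w)\<bar>)"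
    using abs_triangle_ineq[of "w * g'' (1 + w)" "3 * w * g''' (1 + w)"] by (simp add: abs_mult)
  also have "\<dots> \<le> \<bar>w\<bar> * (a + 1) + 3 * (\<bar>w\<bar> * (a/50))"
    using g'' g''' by (intro add_mono mult_left_mono) auto
  also have "\<dots> \<le> 2 * a * \<bar>w\<bar>"
    using a_ge mult_left_mono[of "a + 1 + 3 * (a/50)" "2 * a" "\<bar>w\<bar>"] by (simp add: algebra_simps)
  finally show ?thesis .
qed

lemma abs_Q_le:
  assumes "\<bar>w\<bar> \<le> 1/a"
  shows "\<bar>Q w\<bar> \<le> 2 * a * w\<^sup>2"
proof -
  have "\<bar>Q w - Q 0\<bar> \<le> (2 * a * \<bar>w\<bar>) * \<bar>w - 0\<bar>"
  proof (rule abs_diff_le_by_deriv_bound)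
    fix s assume "s \<in> {min w 0..max w 0}"
    then have s: "\<bar>s\<bar> \<le> \<bar>w\<bar>" "\<bar>s\<bar> \<le> 1/a" using assms by auto
    show "(Q has_real_derivative s * g'' (1 + s) + 3 * s * g''' (1 + s)) (at s)"
      by (rule has_real_derivative_Q[OF s(2)])
    have "\<bar>s * g'' (1 + s) + 3 * s * g''' (1 + s)\<bar> \<le> 2 * a * \<bar>s\<bar>" by (rule abs_deriv_Q_le[OF s(2)])
    also have "\<dots> \<le> 2 * a * \<bar>w\<bar>" using s a_ge by (intro mult_left_mono) auto
    finally show "\<bar>s * g'' (1 + s) + 3 * s * g''' (1 + s)\<bar> \<le> 2 * a * \<bar>w\<bar>" .
  qed
  then show ?thesis by (simp add: power2_eq_square abs_mult)
qed

lemma Q_inv_g''_lipschitz: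
  assumes "\<bar>v\<^sub>1\<bar> \<le> s" "\<bar>v\<^sub>2\<bar> \<le> s" "s \<le> 1/a"
  shows "\<bar>Q v\<^sub>1 * inv_g'' v\<^sub>1 - Q v\<^sub>2 * inv_g'' v\<^sub>2\<bar> \<le> 3 * s * \<bar>v\<^sub>1 - v\<^sub>2\<bar>"
proof (rule abs_diff_le_by_deriv_bound)
  fix w assume "w \<in> {min v\<^sub>1 v\<^sub>2..max v\<^sub>1 v\<^sub>2}"
  then have ws: "\<bar>w\<bar> \<le> s" and w: "\<bar>w\<bar> \<le> 1/a" using assms by auto
  let ?Q' = "w * g'' (1 + w) + 3 * w * g''' (1 + w)" and ?h' = "- g''' (1 + w) / (g'' (1 + w))\<^sup>2"
  show "((\<lambda>w. Q w * inv_g'' w) has_real_derivative ?Q' * inv_g'' w + ?h' * Q w) (at w)"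
    by (rule DERIV_mult[OF has_real_derivative_Q[OF w] has_real_derivative_inv_g''[OF w]])
  have "\<bar>?Q'\<bar> * \<bar>inv_g'' w\<bar> \<le> (2 * a * \<bar>w\<bar>) * (1/(a - 1))"
    using inv_g''_bounds[OF w] a_ge by (intro mult_mono abs_deriv_Q_le[OF w]) auto
  moreover have "\<bar>?h'\<bar> * \<bar>Q w\<bar> \<le> (1/a) * (2 * a * w\<^sup>2)"
    using a_ge by (intro mult_mono abs_deriv_inv_g''_le[OF w] abs_Q_le[OF w]) auto
  ultimately have "\<bar>?Q' * inv_g'' w + ?h' * Q w\<bar> \<le> (2 * a * \<bar>w\<bar>) * (1/(a - 1)) + (1/a) * (2 * a * w\<^sup>2)"
    using abs_triangle_ineq[of "?Q' * inv_g'' w" "?h' * Q w"] unfolding abs_mult by linarith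
  also have "\<dots> = \<bar>w\<bar> * (2 * a / (a - 1) + 2 * \<bar>w\<bar>)"
    using a_ge by (simp add: field_simps power2_eq_square)
  also have "\<dots> \<le> s * 3"
  proof (rule mult_mono)
    have "2 * a / (a - 1) \<le> 2.5" using a_ge by (simp add: divide_simps)
    then show "2 * a / (a - 1) + 2 * \<bar>w\<bar> \<le> 3" using w inv_a_bounds by linarith
  qed (use ws a_ge in auto)
  finally show "\<bar>?Q' * inv_g'' w + ?h' * Q w\<bar> \<le> 3 * s" by (simp add: mult.commute)
qed

definition admissible :: "(real \<Rightarrow> real) \<Rightarrow> bool" where
  "admissible z \<longleftrightarrow> continuous_on {0..1} z \<and> (\<forall>s\<in>{0..1}. \<bar>z s\<bar> \<le> 1/a)"

lemma admissibleD:
  assumes "admissible z"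
  shows "continuous_on {0..1} z" "s \<in> {0..1} \<Longrightarrow> \<bar>z s\<bar> \<le> 1/a"
  using assms by (auto simp: admissible_def)

lemma continuous_on_diff_admissible:
  "admissible z\<^sub>1 \<Longrightarrow> admissible z\<^sub>2 \<Longrightarrow> continuous_on {0..1} (\<lambda>s. z\<^sub>1 s - z\<^sub>2 s)"
  by (intro continuous_intros admissibleD)

lemma abs_sq_mult_le:
  assumes "admissible z" "r \<in> {0..1}"
  shows "\<bar>r\<^sup>2 * z r\<bar> \<le> r\<^sup>2 * (1/a)" "\<bar>r\<^sup>2 * z r\<bar> \<le> 1/a"
proof -
  have "r\<^sup>2 * \<bar>z r\<bar> \<le> r\<^sup>2 * (1/a)" using admissibleD(2)[OF assms] by (intro mult_left_mono) auto
  then show "\<bar>r\<^sup>2 * z r\<bar> \<le> r\<^sup>2 * (1/a)" by (simp add: abs_mult)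
  also have "\<dots> \<le> 1 * (1/a)"
    using assms(2) inv_a_bounds by (intro mult_right_mono) (auto simp: power_le_one)
  finally show "\<bar>r\<^sup>2 * z r\<bar> \<le> 1/a" by simp
qed

lemma continuous_on_inv_g'': "continuous_on {-1/a..1/a} inv_g''"
  by (intro continuous_at_imp_continuous_on ballI DERIV_isCont[OF has_real_derivative_inv_g'']) auto

lemma continuous_on_Q_inv_g'': "continuous_on {-1/a..1/a} (\<lambda>w. Q w * inv_g'' w)"
  by (intro continuous_at_imp_continuous_on ballI continuous_intros
      DERIV_isCont[OF has_real_derivative_inv_g''] DERIV_isCont[OF has_real_derivative_Q]) auto

lemma continuous_on_compose_sq_mult:
  assumes "admissible z" "continuous_on {-1/a..1/a} f"
  shows "continuous_on {0..1} (\<lambda>r. f (r\<^sup>2 * z r))"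
proof (rule continuous_on_compose2[OF assms(2)])
  show "continuous_on {0..1} (\<lambda>r. r\<^sup>2 * z r)" by (intro continuous_intros admissibleD[OF assms(1)])
  show "(\<lambda>r. r\<^sup>2 * z r) ` {0..1} \<subseteq> {-1/a..1/a}"
    using abs_sq_mult_le(2)[OF assms(1)] by (force simp: abs_le_iff)
qed

definition quad_part :: "(real \<Rightarrow> real) \<Rightarrow> real \<Rightarrow> real" where
  "quad_part z r = (if r = 0 then 0 else Q (r\<^sup>2 * z r) * inv_g'' (r\<^sup>2 * z r) / r\<^sup>2)"

text \<open>With \<open>v = R\<^sup>2 z\<close> and \<open>\<phi> R = R exp (log_stretch z R)\<close>, the profile equation with
  right-hand side \<open>(c + m \<lambda>\<^sup>3) \<phi>\<close> is equivalent to \<open>v' = R (source c m z R - 3 z R)\<close>;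
  \<open>Q\<close> collects the terms vanishing to second order at \<open>v = 0\<close>.\<close>

definition source :: "real \<Rightarrow> real \<Rightarrow> (real \<Rightarrow> real) \<Rightarrow> real \<Rightarrow> real" where
  "source c m z r = (c + m * exp (3 * log_stretch z r)) * inv_g'' (r\<^sup>2 * z r) + quad_part z r"

lemma abs_quad_part_le:
  assumes "admissible z" "r \<in> {0..1}"
  shows "\<bar>quad_part z r\<bar> \<le> 3 * r\<^sup>2 * (1/a)\<^sup>2"
proof (cases "r = 0")
  case False
  have v: "\<bar>r\<^sup>2 * z r\<bar> \<le> r\<^sup>2 * (1/a)" by (rule abs_sq_mult_le(1)[OF assms])
  have "r\<^sup>2 * (1/a) \<le> 1 * (1/a)"
    using assms(2) inv_a_bounds by (intro mult_right_mono) (auto simp: power_le_one)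
  then have "\<bar>Q (r\<^sup>2 * z r) * inv_g'' (r\<^sup>2 * z r) - Q 0 * inv_g'' 0\<bar>
      \<le> 3 * (r\<^sup>2 * (1/a)) * \<bar>r\<^sup>2 * z r - 0\<bar>"
    by (intro Q_inv_g''_lipschitz) (use v inv_a_bounds in auto)
  also have "\<dots> \<le> 3 * (r\<^sup>2 * (1/a)) * (r\<^sup>2 * (1/a))"
    using v inv_a_bounds by (intro mult_left_mono) auto
  finally show ?thesis
    using False a_ge by (simp add: quad_part_def abs_divide divide_simps power2_eq_square)
qed (simp add: quad_part_def)

lemma abs_quad_part_le_const:
  assumes "admissible z" "r \<in> {0..1}"
  shows "\<bar>quad_part z r\<bar> \<le> 3 / a\<^sup>2"
proof -
  have "\<bar>quad_part z r\<bar> \<le> 3 * r\<^sup>2 * (1/a)\<^sup>2" by (rule abs_quad_part_le[OF assms])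
  also have "\<dots> \<le> 3 * 1 * (1/a)\<^sup>2"
    using assms(2) by (intro mult_mono mult_left_mono) (auto simp: power_le_one)
  finally show ?thesis by (simp add: power_divide)
qed

lemma continuous_within_quad_part_0:
  assumes "admissible z"
  shows "continuous (at 0 within {0..1}) (quad_part z)"
  unfolding continuous_within_eps_delta
proof (intro allI impI)
  fix e :: real assume "e > 0"
  have "dist (quad_part z r) (quad_part z 0) < e" if r: "r \<in> {0..1}" "dist r 0 < e/3" for r
  proof -
    have "\<bar>quad_part z r\<bar> \<le> 3 * r\<^sup>2 * (1/a)\<^sup>2" by (rule abs_quad_part_le[OF assms r(1)])
    also have "\<dots> \<le> 3 * r * 1"
    proof -
      have "r\<^sup>2 \<le> r" using r by (simp add: power2_eq_square mult_left_le_one_le)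
      moreover have "(1/a)\<^sup>2 \<le> 1" using inv_a_bounds by (simp add: power_le_one)
      ultimately show ?thesis using r by (intro mult_mono) auto
    qed
    also have "\<dots> < e" using r by (auto simp: dist_real_def)
    finally show ?thesis by (simp add: quad_part_def dist_real_def)
  qed
  then show "\<exists>d>0. \<forall>r\<in>{0..1}. dist r 0 < d \<longrightarrow> dist (quad_part z r) (quad_part z 0) < e"
    using \<open>e > 0\<close> by (intro exI[of _ "e/3"]) auto
qed

lemma continuous_on_quad_part:
  assumes "admissible z"
  shows "continuous_on {0..1} (quad_part z)"
  unfolding continuous_on_eq_continuous_within
proof
  fix x :: real assume x: "x \<in> {0..1}"
  show "continuous (at x within {0..1}) (quad_part z)"
  proof (cases "x = 0")
    case True
    then show ?thesis using continuous_within_quad_part_0[OF assms] by simp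
  next
    case False
    then have "x > 0" using x by auto
    have "continuous (at x within {0..1}) (\<lambda>r. Q (r\<^sup>2 * z r) * inv_g'' (r\<^sup>2 * z r))"
      using continuous_on_compose_sq_mult[OF assms continuous_on_Q_inv_g''] x
      by (simp add: continuous_on_eq_continuous_within)
    moreover have "continuous (at x within {0..1}) (\<lambda>r. r\<^sup>2)" by (intro continuous_intros)
    ultimately have "continuous (at x within {0..1}) (\<lambda>r. Q (r\<^sup>2 * z r) * inv_g'' (r\<^sup>2 * z r) / r\<^sup>2)"
      using \<open>x > 0\<close> unfolding continuous_within by (intro tendsto_divide) auto
    then show ?thesis
      by (rule continuous_transform_within[OF _ \<open>x > 0\<close> x]) (auto simp: quad_part_def dist_real_def)
  qed
qed

lemma continuous_on_source:
  assumes "admissible z"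
  shows "continuous_on {0..1} (source c m z)"
  unfolding source_def[abs_def]
  by (intro continuous_intros continuous_on_log_stretch admissibleD[OF assms]
      continuous_on_quad_part[OF assms]
      continuous_on_compose_sq_mult[OF assms continuous_on_inv_g''])

lemma log_stretch_bounds:
  assumes "admissible z" "r \<in> {0..1}"
  shows "\<bar>3 * log_stretch z r\<bar> \<le> 1/2" "exp (3 * log_stretch z r) \<le> 2"
proof -
  have "\<bar>log_stretch z r\<bar> \<le> 2 * (1/a)"
    using abs_log_stretch_le[OF admissibleD(1)[OF assms(1)] admissibleD(2)[OF assms(1)] assms(2)]
    by auto
  moreover have "6/a \<le> 1/2" using a_ge by (simp add: divide_simps)
  ultimately show "\<bar>3 * log_stretch z r\<bar> \<le> 1/2" by linarith
  then have "exp (3 * log_stretch z r) \<le> 1 + 2 * \<bar>3 * log_stretch z r\<bar>"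
    using exp_bound_lemma[of "3 * log_stretch z r"] by simp
  then show "exp (3 * log_stretch z r) \<le> 2" using \<open>\<bar>3 * log_stretch z r\<bar> \<le> 1/2\<close> by linarith
qed

lemma source_bounds:
  assumes z: "admissible z" and r: "r \<in> {0..1}" and c: "c \<in> {1..3}" and m: "\<bar>m\<bar> \<le> 1/10"
  shows "(c - 2 * \<bar>m\<bar>) / (a + 1) - 3 / a\<^sup>2 \<le> source c m z r"
    and "source c m z r \<le> (c + 2 * \<bar>m\<bar>) / (a - 1) + 3 / a\<^sup>2"
proof -
  let ?L = "exp (3 * log_stretch z r)" and ?v = "r\<^sup>2 * z r"
  have "\<bar>m * ?L\<bar> \<le> \<bar>m\<bar> * 2" using log_stretch_bounds[OF z r] by (simp add: abs_mult mult_left_mono)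
  then have cm: "c - 2 * \<bar>m\<bar> \<le> c + m * ?L" "c + m * ?L \<le> c + 2 * \<bar>m\<bar>" by (auto simp: abs_le_iff)
  have "0 \<le> c - 2 * \<bar>m\<bar>" using c m by auto
  moreover note h = inv_g''_bounds[OF abs_sq_mult_le(2)[OF z r]]
  ultimately have "(c - 2 * \<bar>m\<bar>) * (1/(a + 1)) \<le> (c + m * ?L) * inv_g'' ?v"
    and "(c + m * ?L) * inv_g'' ?v \<le> (c + 2 * \<bar>m\<bar>) * (1/(a - 1))"
    using cm a_ge by (intro mult_mono; force)+
  then show "(c - 2 * \<bar>m\<bar>) / (a + 1) - 3 / a\<^sup>2 \<le> source c m z r"
    and "source c m z r \<le> (c + 2 * \<bar>m\<bar>) / (a - 1) + 3 / a\<^sup>2"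
    using abs_quad_part_le_const[OF z r] unfolding source_def by (auto simp: abs_le_iff)
qed

lemma abs_source_le:
  assumes "admissible z" "r \<in> {0..1}" "c \<in> {1..3}" "\<bar>m\<bar> \<le> 1/10"
  shows "\<bar>source c m z r\<bar> \<le> 5 / a"
proof -
  have "(c + 2 * \<bar>m\<bar>) / (a - 1) \<le> 3.2 / (a - 1)" using assms(3,4) a_ge by (intro divide_right_mono) auto
  also have "\<dots> \<le> 4 / a" using a_ge by (simp add: divide_simps)
  finally have "(c + 2 * \<bar>m\<bar>) / (a - 1) \<le> 4 / a" .
  moreover have "3 / a\<^sup>2 \<le> 1 / a" using a_ge by (simp add: divide_simps power2_eq_square)
  moreover have "0 \<le> (c - 2 * \<bar>m\<bar>) / (a + 1)" using assms(3,4) a_ge by auto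
  ultimately show ?thesis using source_bounds[OF assms] by (simp add: abs_le_iff)
qed

lemma source_param_diff:
  assumes "admissible z" "r \<in> {0..1}"
  shows "\<bar>source c m z r - source c' m' z r\<bar> \<le> (\<bar>c - c'\<bar> + 2 * \<bar>m - m'\<bar>) / (a - 1)"
proof -
  let ?L = "exp (3 * log_stretch z r)" and ?v = "r\<^sup>2 * z r"
  have h: "0 < inv_g'' ?v" "inv_g'' ?v \<le> 1/(a - 1)"
    using inv_g''_bounds[OF abs_sq_mult_le(2)[OF assms]] by auto
  have "\<bar>(m - m') * ?L\<bar> \<le> \<bar>m - m'\<bar> * 2"
    using log_stretch_bounds[OF assms] by (simp add: abs_mult mult_left_mono)
  then have "\<bar>(c - c') + (m - m') * ?L\<bar> \<le> \<bar>c - c'\<bar> + \<bar>m - m'\<bar> * 2"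
    using abs_triangle_ineq[of "c - c'" "(m - m') * ?L"] by linarith
  then have "\<bar>(c - c') + (m - m') * ?L\<bar> * \<bar>inv_g'' ?v\<bar> \<le> (\<bar>c - c'\<bar> + \<bar>m - m'\<bar> * 2) * (1/(a - 1))"
    using h by (intro mult_mono) auto
  moreover have "source c m z r - source c' m' z r = ((c - c') + (m - m') * ?L) * inv_g'' ?v"
    unfolding source_def by (simp add: algebra_simps)
  ultimately show ?thesis by (simp add: abs_mult mult.commute)
qed

lemma quad_part_lipschitz:
  assumes z\<^sub>1: "admissible z\<^sub>1" and z\<^sub>2: "admissible z\<^sub>2"
    and D: "\<bar>z\<^sub>1 r - z\<^sub>2 r\<bar> \<le> D" and r: "r \<in> {0..1}"
  shows "\<bar>quad_part z\<^sub>1 r - quad_part z\<^sub>2 r\<bar> \<le> 3 * D / a"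
proof (cases "r = 0")
  case True
  then show ?thesis using D inv_a_bounds by (simp add: quad_part_def)
next
  case False
  let ?v\<^sub>1 = "r\<^sup>2 * z\<^sub>1 r" and ?v\<^sub>2 = "r\<^sup>2 * z\<^sub>2 r"
  have r2: "r\<^sup>2 \<le> 1" using r by (simp add: power_le_one)
  have "r\<^sup>2 * (1/a) \<le> 1/a" using r2 inv_a_bounds mult_right_mono[of "r\<^sup>2" 1 "1/a"] by simp
  then have "\<bar>Q ?v\<^sub>1 * inv_g'' ?v\<^sub>1 - Q ?v\<^sub>2 * inv_g'' ?v\<^sub>2\<bar> \<le> 3 * (r\<^sup>2 * (1/a)) * \<bar>?v\<^sub>1 - ?v\<^sub>2\<bar>"
    by (intro Q_inv_g''_lipschitz abs_sq_mult_le(1) z\<^sub>1 z\<^sub>2 r)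
  also have "\<bar>?v\<^sub>1 - ?v\<^sub>2\<bar> = r\<^sup>2 * \<bar>z\<^sub>1 r - z\<^sub>2 r\<bar>" by (simp add: abs_mult flip: right_diff_distrib)
  also have "3 * (r\<^sup>2 * (1/a)) * (r\<^sup>2 * \<bar>z\<^sub>1 r - z\<^sub>2 r\<bar>) = r\<^sup>2 * (3 * (1/a) * \<bar>z\<^sub>1 r - z\<^sub>2 r\<bar> * r\<^sup>2)"
    by (simp add: mult_ac)
  also have "\<dots> \<le> r\<^sup>2 * (3 * (1/a) * D * 1)"
    using D r2 inv_a_bounds by (intro mult_left_mono mult_mono) auto
  finally have "\<bar>Q ?v\<^sub>1 * inv_g'' ?v\<^sub>1 - Q ?v\<^sub>2 * inv_g'' ?v\<^sub>2\<bar> / r\<^sup>2 \<le> 3 * D / a"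
    using False by (simp add: pos_divide_le_eq mult.commute)
  then show ?thesis
    using False by (simp add: quad_part_def abs_divide diff_divide_distrib[symmetric])
qed

lemma exp_3_log_stretch_lipschitz:
  assumes z\<^sub>1: "admissible z\<^sub>1" and z\<^sub>2: "admissible z\<^sub>2"
    and D: "\<And>s. s \<in> {0..1} \<Longrightarrow> \<bar>z\<^sub>1 s - z\<^sub>2 s\<bar> \<le> D" and r: "r \<in> {0..1}"
  shows "\<bar>exp (3 * log_stretch z\<^sub>1 r) - exp (3 * log_stretch z\<^sub>2 r)\<bar> \<le> 12 * D"
proof -
  have "\<bar>exp (3 * log_stretch z\<^sub>1 r) - exp (3 * log_stretch z\<^sub>2 r)\<bar>
      \<le> 2 * \<bar>3 * log_stretch z\<^sub>1 r - 3 * log_stretch z\<^sub>2 r\<bar>"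
    by (intro abs_exp_diff_le log_stretch_bounds(1) z\<^sub>1 z\<^sub>2 r)
  also have "\<dots> = 6 * \<bar>log_stretch (\<lambda>s. z\<^sub>1 s - z\<^sub>2 s) r\<bar>"
    by (simp add: abs_mult log_stretch_diff[OF admissibleD(1)[OF z\<^sub>1] admissibleD(1)[OF z\<^sub>2] r]
        flip: right_diff_distrib)
  also have "\<dots> \<le> 6 * (2 * D)"
    by (intro mult_left_mono abs_log_stretch_le[OF continuous_on_diff_admissible[OF z\<^sub>1 z\<^sub>2] D r]) auto
  finally show ?thesis by simp
qed

lemma source_lipschitz:
  assumes z\<^sub>1: "admissible z\<^sub>1" and z\<^sub>2: "admissible z\<^sub>2"
    and D: "\<And>s. s \<in> {0..1} \<Longrightarrow> \<bar>z\<^sub>1 s - z\<^sub>2 s\<bar> \<le> D"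
    and r: "r \<in> {0..1}" and c: "c \<in> {1..3}" and m: "\<bar>m\<bar> \<le> 1/10"
  shows "\<bar>source c m z\<^sub>1 r - source c m z\<^sub>2 r\<bar> \<le> 9 * D / a"
proof -
  let ?L\<^sub>1 = "exp (3 * log_stretch z\<^sub>1 r)" and ?L\<^sub>2 = "exp (3 * log_stretch z\<^sub>2 r)"
  let ?h\<^sub>1 = "inv_g'' (r\<^sup>2 * z\<^sub>1 r)" and ?h\<^sub>2 = "inv_g'' (r\<^sup>2 * z\<^sub>2 r)"
  have "0 \<le> D" using D[of 0] by auto
  have "\<bar>r\<^sup>2 * z\<^sub>1 r - r\<^sup>2 * z\<^sub>2 r\<bar> = r\<^sup>2 * \<bar>z\<^sub>1 r - z\<^sub>2 r\<bar>" by (simp add: abs_mult flip: right_diff_distrib)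
  also have "\<dots> \<le> 1 * D" using r D[OF r] \<open>0 \<le> D\<close> by (intro mult_mono) (auto simp: power_le_one)
  finally have "\<bar>?h\<^sub>1 - ?h\<^sub>2\<bar> \<le> D / a"
    using inv_g''_lipschitz[OF abs_sq_mult_le(2)[OF z\<^sub>1 r] abs_sq_mult_le(2)[OF z\<^sub>2 r]] a_ge
    by (smt (verit) divide_right_mono)
  then have dh: "\<bar>c * (?h\<^sub>1 - ?h\<^sub>2)\<bar> \<le> 3 * (D / a)" "\<bar>?L\<^sub>2 * (?h\<^sub>1 - ?h\<^sub>2)\<bar> \<le> 2 * (D / a)"
    using c log_stretch_bounds(2)[OF z\<^sub>2 r] unfolding abs_mult by (intro mult_mono; simp)+
  have "\<bar>(?L\<^sub>1 - ?L\<^sub>2) * ?h\<^sub>1\<bar> \<le> (12 * D) * (1/(a - 1))"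
    unfolding abs_mult
    using exp_3_log_stretch_lipschitz[OF z\<^sub>1 z\<^sub>2 D r] inv_g''_bounds[OF abs_sq_mult_le(2)[OF z\<^sub>1 r]]
    by (intro mult_mono) auto
  also have "\<dots> \<le> 13 * D / a"
    using a_ge \<open>0 \<le> D\<close> mult_left_mono[of "12 * a" "13 * (a - 1)" D]
    by (simp add: divide_simps algebra_simps)
  finally have "\<bar>(?L\<^sub>1 - ?L\<^sub>2) * ?h\<^sub>1 + ?L\<^sub>2 * (?h\<^sub>1 - ?h\<^sub>2)\<bar> \<le> 15 * D / a"
    using abs_triangle_ineq[of "(?L\<^sub>1 - ?L\<^sub>2) * ?h\<^sub>1" "?L\<^sub>2 * (?h\<^sub>1 - ?h\<^sub>2)"] dh(2) by simp
  then have dm: "\<bar>m * ((?L\<^sub>1 - ?L\<^sub>2) * ?h\<^sub>1 + ?L\<^sub>2 * (?h\<^sub>1 - ?h\<^sub>2))\<bar> \<le> (1/10) * (15 * D / a)"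
    unfolding abs_mult using m by (intro mult_mono) auto
  have "source c m z\<^sub>1 r - source c m z\<^sub>2 r = c * (?h\<^sub>1 - ?h\<^sub>2)
      + m * ((?L\<^sub>1 - ?L\<^sub>2) * ?h\<^sub>1 + ?L\<^sub>2 * (?h\<^sub>1 - ?h\<^sub>2)) + (quad_part z\<^sub>1 r - quad_part z\<^sub>2 r)"
    unfolding source_def by (simp add: algebra_simps)
  then have "\<bar>source c m z\<^sub>1 r - source c m z\<^sub>2 r\<bar> \<le> 3 * (D / a) + (1/10) * (15 * D / a) + 3 * D / a"
    using dh(1) dm quad_part_lipschitz[OF z\<^sub>1 z\<^sub>2 D[OF r] r] by (smt (verit))
  also have "\<dots> \<le> 9 * D / a" using \<open>0 \<le> D\<close> a_ge by (simp add: divide_simps)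
  finally show ?thesis .
qed

definition admissible_params :: "real \<Rightarrow> real \<Rightarrow> bool" where
  "admissible_params c m \<longleftrightarrow> c \<in> {1..3} \<and> \<bar>m\<bar> \<le> 1/10"

text \<open>Functions on \<open>[0, 1]\<close> are extended to \<open>\<real>\<close> as constants outside \<open>[0, 1]\<close>, so that the
  fixed point can be sought in the complete metric space of bounded continuous functions.\<close>

definition Zball :: "(real \<Rightarrow>\<^sub>C real) set" where
  "Zball = PiC UNIV (\<lambda>_. {-1/a..1/a})"

definition fp_map :: "real \<Rightarrow> real \<Rightarrow> (real \<Rightarrow>\<^sub>C real) \<Rightarrow> (real \<Rightarrow>\<^sub>C real)" where
  "fp_map c m z = Bcontfun (ext_cont (avg4 (source c m (apply_bcontfun z))) 0 1)"

lemma clamp_01: "clamp 0 1 (R::real) \<in> {0..1}" "R \<in> {0..1} \<Longrightarrow> clamp 0 1 R = R"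
  using clamp_in_interval[of 0 1 R] clamp_cancel_cbox[of R 0 1] by (auto simp: cbox_interval)

lemma Zball_iff: "z \<in> Zball \<longleftrightarrow> (\<forall>x. \<bar>apply_bcontfun z x\<bar> \<le> 1/a)"
proof -
  have "y \<in> {-1/a..1/a} \<longleftrightarrow> \<bar>y\<bar> \<le> 1/a" for y by (auto simp: abs_le_iff)
  then show ?thesis by (simp add: Zball_def mem_PiC_iff Pi_def)
qed

lemma admissible_Zball: "z \<in> Zball \<Longrightarrow> admissible (apply_bcontfun z)"
  unfolding admissible_def Zball_iff by auto

lemma complete_Zball: "complete Zball"
  unfolding complete_eq_closed Zball_def by (rule closed_PiC) auto

lemma zero_in_Zball: "0 \<in> Zball"
  unfolding Zball_iff using inv_a_bounds by simp

lemma abs_avg4_source_le: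
  assumes "admissible z" "admissible_params c m" "R \<in> {0..1}"
  shows "\<bar>avg4 (source c m z) R\<bar> \<le> 1/a"
proof -
  have "\<bar>avg4 (source c m z) R\<bar> \<le> (5/a)/5"
    using assms by (intro abs_avg4_le abs_source_le continuous_on_subset[OF continuous_on_source])
      (auto simp: admissible_params_def)
  then show ?thesis by simp
qed

lemma apply_fp_map:
  assumes "z \<in> Zball" "admissible_params c m"
  shows "apply_bcontfun (fp_map c m z) = ext_cont (avg4 (source c m (apply_bcontfun z))) 0 1"
proof -
  let ?f = "ext_cont (avg4 (source c m (apply_bcontfun z))) 0 1"
  have K: "continuous_on {0..1} (source c m (apply_bcontfun z))"
    by (rule continuous_on_source[OF admissible_Zball[OF assms(1)]])
  have "continuous_on UNIV ?f"
    using continuous_on_avg4[OF K] by (intro continuous_on_ext_cont) (simp add: cbox_interval)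
  moreover have "\<bar>?f R\<bar> \<le> 1/a" for R
    unfolding ext_cont_def by (intro abs_avg4_source_le admissible_Zball assms clamp_01(1))
  ultimately have "?f \<in> bcontfun" by (intro bcontfun_normI) auto
  then show ?thesis by (simp add: fp_map_def Bcontfun_inverse)
qed

lemma fp_map_in_Zball:
  assumes "z \<in> Zball" "admissible_params c m"
  shows "fp_map c m z \<in> Zball"
  unfolding Zball_iff apply_fp_map[OF assms] ext_cont_def
  by (intro allI abs_avg4_source_le admissible_Zball assms clamp_01(1))

lemma dist_fp_map_le:
  assumes z\<^sub>1: "z\<^sub>1 \<in> Zball" and z\<^sub>2: "z\<^sub>2 \<in> Zball"
    and p: "admissible_params c m" and p': "admissible_params c' m'"
    and B: "\<And>r. r \<in> {0..1} \<Longrightarrow>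
      \<bar>source c m (apply_bcontfun z\<^sub>1) r - source c' m' (apply_bcontfun z\<^sub>2) r\<bar> \<le> B"
  shows "dist (fp_map c m z\<^sub>1) (fp_map c' m' z\<^sub>2) \<le> B / 5"
proof (rule dist_bound)
  fix x :: real
  let ?K\<^sub>1 = "source c m (apply_bcontfun z\<^sub>1)" and ?K\<^sub>2 = "source c' m' (apply_bcontfun z\<^sub>2)"
  let ?R = "clamp 0 1 x"
  have K: "continuous_on {0..?R} ?K\<^sub>1" "continuous_on {0..?R} ?K\<^sub>2"
    using clamp_01(1)[of x]
    by (auto intro!: continuous_on_subset[OF continuous_on_source] admissible_Zball z\<^sub>1 z\<^sub>2)
  have "\<bar>avg4 (\<lambda>r. ?K\<^sub>1 r - ?K\<^sub>2 r) ?R\<bar> \<le> B / 5"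
    using K clamp_01(1)[of x] by (intro abs_avg4_le B continuous_intros) auto
  then show "dist (apply_bcontfun (fp_map c m z\<^sub>1) x) (apply_bcontfun (fp_map c' m' z\<^sub>2) x) \<le> B / 5"
    by (simp add: apply_fp_map z\<^sub>1 z\<^sub>2 p p' ext_cont_def dist_real_def avg4_diff[OF K])
qed

lemma fp_map_contraction:
  assumes z\<^sub>1: "z\<^sub>1 \<in> Zball" and z\<^sub>2: "z\<^sub>2 \<in> Zball" and p: "admissible_params c m"
  shows "dist (fp_map c m z\<^sub>1) (fp_map c m z\<^sub>2) \<le> (1/2) * dist z\<^sub>1 z\<^sub>2"
proof -
  have "dist (fp_map c m z\<^sub>1) (fp_map c m z\<^sub>2) \<le> (9 * dist z\<^sub>1 z\<^sub>2 / a) / 5"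
    using p dist_bounded[of z\<^sub>1 _ z\<^sub>2]
    by (intro dist_fp_map_le[OF z\<^sub>1 z\<^sub>2 p p] source_lipschitz admissible_Zball z\<^sub>1 z\<^sub>2)
      (auto simp: admissible_params_def dist_real_def)
  also have "\<dots> \<le> (1/2) * dist z\<^sub>1 z\<^sub>2"
    using a_ge mult_left_mono[of 18 "a * 5" "dist z\<^sub>1 z\<^sub>2"] by (simp add: divide_simps mult.commute)
  finally show ?thesis .
qed

definition zfix :: "real \<Rightarrow> real \<Rightarrow> (real \<Rightarrow>\<^sub>C real)" where
  "zfix c m = (SOME z. z \<in> Zball \<and> fp_map c m z = z)"

lemma zfix_fixed_point:
  assumes "admissible_params c m"
  shows "zfix c m \<in> Zball" "fp_map c m (zfix c m) = zfix c m"
proof -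
  have "\<exists>!z\<in>Zball. fp_map c m z = z"
    using complete_Zball zero_in_Zball fp_map_in_Zball[OF _ assms] fp_map_contraction[OF _ _ assms]
    by (intro Banach_fix[where c = "1/2"]) auto
  then have "\<exists>z. z \<in> Zball \<and> fp_map c m z = z" by blast
  from someI_ex[OF this] show "zfix c m \<in> Zball" "fp_map c m (zfix c m) = zfix c m"
    unfolding zfix_def by auto
qed

lemma admissible_zfix: "admissible_params c m \<Longrightarrow> admissible (apply_bcontfun (zfix c m))"
  by (rule admissible_Zball[OF zfix_fixed_point(1)])

lemma zfix_eq_avg4:
  assumes "admissible_params c m" "R \<in> {0..1}"
  shows "apply_bcontfun (zfix c m) R = avg4 (source c m (apply_bcontfun (zfix c m))) R"
  using apply_fp_map[OF zfix_fixed_point(1)[OF assms(1)] assms(1)] zfix_fixed_point(2)[OF assms(1)]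
    clamp_01(2)[OF assms(2)]
  by (metis ext_cont_def)

lemma zfix_lipschitz:
  assumes p: "admissible_params c m" and p': "admissible_params c' m'"
  shows "dist (zfix c m) (zfix c' m') \<le> 2 * ((\<bar>c - c'\<bar> + 2 * \<bar>m - m'\<bar>) / (a - 1) / 5)"
proof -
  let ?z = "zfix c m" and ?z' = "zfix c' m'"
  have "dist ?z ?z'
      \<le> dist (fp_map c m ?z) (fp_map c' m' ?z) + dist (fp_map c' m' ?z) (fp_map c' m' ?z')"
    using zfix_fixed_point(2)[OF p] zfix_fixed_point(2)[OF p'] dist_triangle by metis
  also have "\<dots> \<le> (\<bar>c - c'\<bar> + 2 * \<bar>m - m'\<bar>) / (a - 1) / 5 + (1/2) * dist ?z ?z'"
    by (intro add_mono dist_fp_map_le fp_map_contraction zfix_fixed_point(1) p p'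
        source_param_diff admissible_zfix)
  finally show ?thesis by linarith
qed

lemma zfix_at_1_bounds:
  assumes p: "admissible_params c m"
  shows "((c - 2 * \<bar>m\<bar>) / (a + 1) - 3 / a\<^sup>2) / 5 \<le> apply_bcontfun (zfix c m) 1"
    and "apply_bcontfun (zfix c m) 1 \<le> ((c + 2 * \<bar>m\<bar>) / (a - 1) + 3 / a\<^sup>2) / 5"
proof -
  let ?z = "apply_bcontfun (zfix c m)"
  have "((c - 2 * \<bar>m\<bar>) / (a + 1) - 3 / a\<^sup>2) / 5 \<le> avg4 (source c m ?z) 1 \<and>
        avg4 (source c m ?z) 1 \<le> ((c + 2 * \<bar>m\<bar>) / (a - 1) + 3 / a\<^sup>2) / 5"
    using source_bounds[OF admissible_zfix[OF p]] p
    by (intro avg4_bounds continuous_on_source admissible_zfix) (auto simp: admissible_params_def)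
  then show "((c - 2 * \<bar>m\<bar>) / (a + 1) - 3 / a\<^sup>2) / 5 \<le> ?z 1"
    and "?z 1 \<le> ((c + 2 * \<bar>m\<bar>) / (a - 1) + 3 / a\<^sup>2) / 5"
    using zfix_eq_avg4[OF p, of 1] by auto
qed

lemma g'_root_exists: "\<exists>v\<in>{0..1/a}. g' (1 + v) = 0"
proof -
  have "continuous_on {0..1/a} (\<lambda>t. g' (1 + t))"
    using inv_a_bounds
    by (intro continuous_at_imp_continuous_on ballI DERIV_isCont[OF has_deriv_shifted(2)]) auto
  moreover have "M * (1/a)\<^sup>2 \<le> 1/2"
  proof -
    have "M * (1/a)\<^sup>2 \<le> (a/50) * (1/a)\<^sup>2" using M_le by (intro mult_right_mono) auto
    also have "\<dots> \<le> 1/2" using a_ge by (simp add: power2_eq_square divide_simps)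
    finally show ?thesis .
  qed
  moreover have "\<bar>g' (1 + 1/a) + 1/3 - a * (1/a)\<bar> \<le> M * (1/a)\<^sup>2"
    using inv_a_bounds by (intro g'_near_1) auto
  ultimately show ?thesis
    using IVT'[of "\<lambda>t. g' (1 + t)" 0 0 "1/a"] deriv_g_1 inv_a_bounds by (auto simp: abs_le_iff)
qed

lemma g'_root:
  obtains v where "g' (1 + v) = 0" "1/(3 * (a + 1)) \<le> v" "v \<le> 1/(3 * (a - 1))"
proof -
  obtain v where v: "v \<in> {0..1/a}" "g' (1 + v) = 0" using g'_root_exists by blast
  then have "\<bar>1/3 - a * v\<bar> \<le> M * v\<^sup>2" using g'_near_1[of v] inv_a_bounds by auto
  also have "\<dots> \<le> (a/50) * ((1/a) * v)"
    using M_le M_nonneg v(1) mult_right_mono[of v "1/a" v]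
    by (intro mult_mono) (auto simp: power2_eq_square)
  also have "\<dots> = v/50" using a_ge by simp
  finally have "\<bar>1/3 - a * v\<bar> \<le> v/50" .
  then have "1/3 \<le> a * v + v" "a * v - v \<le> 1/3"
    using abs_le_D1 abs_le_D2 v(1) by fastforce+
  then have "1/(3 * (a + 1)) \<le> v" "v \<le> 1/(3 * (a - 1))"
    using a_ge by (simp_all add: divide_simps algebra_simps)
  with v(2) show ?thesis using that by blast
qed

lemma zfix_c1_at_1_le:
  assumes "admissible_params 1 m"
  shows "apply_bcontfun (zfix 1 m) 1 \<le> 1/(3 * (a + 1))"
proof -
  have m: "\<bar>m\<bar> \<le> 1/10" using assms by (simp add: admissible_params_def)
  have "apply_bcontfun (zfix 1 m) 1 \<le> ((1 + 2 * \<bar>m\<bar>) / (a - 1) + 3 / a\<^sup>2) / 5"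
    by (rule zfix_at_1_bounds(2)[OF assms])
  also have "\<dots> \<le> (1.2 / (a - 1) + 1/(100 * a)) / 5"
    using m a_ge by (intro divide_right_mono add_mono) (auto simp: divide_simps power2_eq_square)
  also have "\<dots> \<le> (1.3 / a + 1/(100 * a)) / 5"
  proof -
    have "1.2 / (a - 1) \<le> 1.3 / a" using a_ge by (simp add: divide_simps)
    then show ?thesis by simp
  qed
  also have "\<dots> \<le> 1/(3 * (a + 1))" using a_ge by (simp add: divide_simps)
  finally show ?thesis .
qed

lemma zfix_c3_at_1_ge:
  assumes "admissible_params 3 m"
  shows "1/(3 * (a - 1)) \<le> apply_bcontfun (zfix 3 m) 1"
proof -
  have m: "\<bar>m\<bar> \<le> 1/10" using assms by (simp add: admissible_params_def)
  have "1/(3 * (a - 1)) \<le> 0.34 / a" using a_ge by (simp add: divide_simps)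
  also have "\<dots> \<le> (2.7 / a - 1/(100 * a)) / 5" using a_ge by (simp add: divide_simps)
  also have "\<dots> \<le> (2.8 / (a + 1) - 1/(100 * a)) / 5"
  proof -
    have "2.7 / a \<le> 2.8 / (a + 1)" using a_ge by (simp add: divide_simps)
    then show ?thesis by simp
  qed
  also have "\<dots> \<le> ((3 - 2 * \<bar>m\<bar>) / (a + 1) - 3 / a\<^sup>2) / 5"
    using m a_ge by (intro divide_right_mono diff_mono) (auto simp: divide_simps power2_eq_square)
  also have "\<dots> \<le> apply_bcontfun (zfix 3 m) 1" by (rule zfix_at_1_bounds(1)[OF assms])
  finally show ?thesis .
qed

lemma continuous_on_zfix_at_1:
  assumes mf: "continuous_on {1..3} mf" and mf_bound: "\<And>c. c \<in> {1..3} \<Longrightarrow> \<bar>mf c\<bar> \<le> 1/10"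
  shows "continuous_on {1..3} (\<lambda>c. apply_bcontfun (zfix c (mf c)) 1)"
  unfolding continuous_on_def
proof
  fix c :: real assume c: "c \<in> {1..3}"
  let ?Z = "\<lambda>c. apply_bcontfun (zfix c (mf c)) 1" and ?B = "\<lambda>c'. \<bar>c' - c\<bar> + 2 * \<bar>mf c' - mf c\<bar>"
  have bound: "dist (?Z c') (?Z c) \<le> dist (?B c') 0" if "c' \<in> {1..3}" for c'
  proof -
    have "dist (?Z c') (?Z c) \<le> dist (zfix c' (mf c')) (zfix c (mf c))" by (rule dist_bounded)
    also have "\<dots> \<le> 2 * (?B c' / (a - 1) / 5)"
      using that c mf_bound by (intro zfix_lipschitz) (auto simp: admissible_params_def)
    also have "\<dots> \<le> ?B c'"
    proof -
      have scale: "2 * (X / (a - 1) / 5) \<le> X" if "0 \<le> X" for X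
      proof -
        have "X * (2 / (5 * (a - 1))) \<le> X * 1"
          using that a_ge by (intro mult_left_mono) (auto simp: divide_simps)
        then show ?thesis by (simp add: field_simps)
      qed
      show ?thesis by (rule scale) simp
    qed
    finally show ?thesis by simp
  qed
  have "\<forall>\<^sub>F c' in at c within {1..3}. c' \<in> {1..3}" by (simp add: eventually_at_filter)
  then have ev: "\<forall>\<^sub>F c' in at c within {1..3}. dist (?Z c') (?Z c) \<le> dist (?B c') 0"
    by (rule eventually_mono) (rule bound)
  have "(mf \<longlongrightarrow> mf c) (at c within {1..3})" using mf c by (simp add: continuous_on_def)
  then have "(?B \<longlongrightarrow> \<bar>c - c\<bar> + 2 * \<bar>mf c - mf c\<bar>) (at c within {1..3})" by (intro tendsto_intros)
  then have "(?B \<longlongrightarrow> 0) (at c within {1..3})" by simp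
  from metric_tendsto_imp_tendsto[OF this ev] show "(?Z \<longlongrightarrow> ?Z c) (at c within {1..3})" .
qed

lemma shooting:
  assumes "continuous_on {1..3} mf" "\<And>c. c \<in> {1..3} \<Longrightarrow> \<bar>mf c\<bar> \<le> 1/10"
  shows "\<exists>c\<in>{1..3}. g' (1 + apply_bcontfun (zfix c (mf c)) 1) = 0"
proof -
  obtain v where v: "g' (1 + v) = 0" "1/(3 * (a + 1)) \<le> v" "v \<le> 1/(3 * (a - 1))"
    using g'_root by blast
  have "apply_bcontfun (zfix 1 (mf 1)) 1 \<le> v" "v \<le> apply_bcontfun (zfix 3 (mf 3)) 1"
    using zfix_c1_at_1_le[of "mf 1"] zfix_c3_at_1_ge[of "mf 3"] assms(2) v
    by (force simp: admissible_params_def)+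
  then obtain c where "c \<in> {1..3}" "apply_bcontfun (zfix c (mf c)) 1 = v"
    using IVT'[of "\<lambda>c. apply_bcontfun (zfix c (mf c)) 1" 1 v 3] continuous_on_zfix_at_1[OF assms]
    by auto
  then show ?thesis using v(1) by auto
qed

lemma has_real_derivative_sq_mult_fixed_point:
  assumes z: "admissible z" and fp: "\<And>R. R \<in> {0..1} \<Longrightarrow> z R = avg4 (source c m z) R"
    and R: "R \<in> {0..1}"
  shows "((\<lambda>r. r\<^sup>2 * z r) has_real_derivative R * (source c m z R - 3 * z R)) (at R within {0..1})"
proof -
  have "((\<lambda>r. r\<^sup>2 * avg4 (source c m z) r) has_real_derivative R * (source c m z R - 3 * z R))
      (at R within {0..1})"
    using has_real_derivative_sq_avg4[OF continuous_on_source[OF z] R] fp[OF R] by simp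
  then show ?thesis
    by (rule has_field_derivative_transform_within[OF _ zero_less_one R]) (simp add: fp)
qed

lemma profile_equation:
  assumes p: "admissible_params c m" and z: "admissible z"
    and fp: "\<And>R. R \<in> {0..1} \<Longrightarrow> z R = avg4 (source c m z) R" and R: "R \<in> {0<..1}"
  defines "\<phi> \<equiv> \<lambda>r. r * stretch z r"
  shows "\<exists>D. ((\<lambda>r. r ^ 4 / \<phi> r * g' (1 + r\<^sup>2 * z r)) has_real_derivative D) (at R within {0..1})
    \<and> (\<phi> R)\<^sup>2 / R ^ 5 * D + \<phi> R / R\<^sup>2 * g (1 + R\<^sup>2 * z R) = (c + m * stretch z R ^ 3) * \<phi> R"
proof -
  let ?L = "stretch z" and ?v = "\<lambda>r. r\<^sup>2 * z r"
  have R': "R \<in> {0..1}" "R \<noteq> 0" using R by auto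
  have "-1 < ?v R" using abs_sq_mult_le(2)[OF z R'(1)] inv_a_bounds by linarith
  then have "((\<lambda>r. g' (1 + ?v r)) has_real_derivative
      g'' (1 + ?v R) * (0 + R * (source c m z R - 3 * z R))) (at R within {0..1})"
    by (intro DERIV_chain2[OF has_deriv_g'] DERIV_add[OF DERIV_const]
        has_real_derivative_sq_mult_fixed_point[OF z fp R'(1)]) auto
  moreover have "((\<lambda>r. r ^ 3 / ?L r) has_real_derivative
      (3 * R\<^sup>2 * ?L R - R ^ 3 * (?L R * (R * z R))) / (?L R * ?L R)) (at R within {0..1})"
    using DERIV_divide[OF DERIV_pow[of 3] has_real_derivative_stretch[OF admissibleD(1)[OF z] R'(1)]]
      stretch_pos[of z R] by (simp add: power2_eq_square)
  moreover have "(\<lambda>r. r ^ 4 / \<phi> r * g' (1 + ?v r)) = (\<lambda>r. r ^ 3 / ?L r * g' (1 + ?v r))"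
    by (auto simp: \<phi>_def eval_nat_numeral)
  ultimately obtain D
    where D: "((\<lambda>r. r ^ 4 / \<phi> r * g' (1 + ?v r)) has_real_derivative D) (at R within {0..1})"
    and D_eq: "D = (3 * R\<^sup>2 * ?L R - R ^ 3 * (?L R * (R * z R))) / (?L R * ?L R) * g' (1 + ?v R)
      + g'' (1 + ?v R) * (R * (source c m z R - 3 * z R)) * (R ^ 3 / ?L R)"
    using DERIV_mult by fastforce
  have "source c m z R = (c + m * ?L R ^ 3) / g'' (1 + ?v R) + Q (?v R) / g'' (1 + ?v R) / R\<^sup>2"
    using R'(2) by (simp add: source_def quad_part_def inv_g''_def stretch_cube)
  then have "(\<phi> R)\<^sup>2 / R ^ 5 * D + \<phi> R / R\<^sup>2 * g (1 + ?v R) = (c + m * ?L R ^ 3) * \<phi> R"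
    unfolding D_eq \<phi>_def
    using g''_bounds[OF abs_sq_mult_le(2)[OF z R'(1)]] a_ge stretch_pos[of z R] R'(2)
    by (intro profile_identity) (auto simp: Q_def)
  with D show ?thesis by blast
qed

lemma profile_of_fixed_point:
  assumes p: "admissible_params c m" and z: "admissible z"
    and fp: "\<And>R. R \<in> {0..1} \<Longrightarrow> z R = avg4 (source c m z) R"
    and traction: "g' (1 + z 1) = 0"
  shows "\<exists>\<phi> \<phi>' \<phi>''. solves_profile g (\<lambda>L. c + m * L ^ 3) \<phi> \<phi>' \<phi>''"
proof -
  let ?L = "stretch z" and ?v = "\<lambda>r. r\<^sup>2 * z r" and ?K = "source c m z"
  define \<phi> where "\<phi> r = r * ?L r" for r
  define \<phi>' where "\<phi>' r = ?L r * (1 + ?v r)" for r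
  define \<phi>'' where "\<phi>'' r = ?L r * (r * z r) * (1 + ?v r) + r * (?K r - 3 * z r) * ?L r" for r
  have zc: "continuous_on {0..1} z" by (rule admissibleD(1)[OF z])
  have v: "0 < 1 + ?v r" if "r \<in> {0..1}" for r
    using abs_sq_mult_le(2)[OF z that] inv_a_bounds by linarith
  have "(\<phi> has_real_derivative \<phi>' R) (at R within {0..1})" if R: "R \<in> {0..1}" for R
    using DERIV_mult[OF DERIV_ident has_real_derivative_stretch[OF zc R]]
    by (simp add: \<phi>_def[abs_def] \<phi>'_def algebra_simps power2_eq_square)
  moreover have "(\<phi>' has_real_derivative \<phi>'' R) (at R within {0..1})" if R: "R \<in> {0..1}" for R
    using DERIV_mult[OF has_real_derivative_stretch[OF zc R]
        DERIV_add[OF DERIV_const[of 1] has_real_derivative_sq_mult_fixed_point[OF z fp R]]]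
    by (simp add: \<phi>'_def[abs_def] \<phi>''_def algebra_simps)
  moreover have "(if r = 0 then \<phi>' 0 else \<phi> r / r) = ?L r" for r
    using stretch_pos[of z r] by (simp add: \<phi>_def \<phi>'_def)
  moreover have "\<phi>' r / ?L r = 1 + ?v r" for r
    using stretch_pos[of z r] by (simp add: \<phi>'_def)
  moreover have "\<phi>' 1 = 1 + z 1" by (simp add: \<phi>'_def)
  moreover have "\<phi>' R > 0" if "R \<in> {0..1}" for R
    using stretch_pos[of z R] v[OF that] by (simp add: \<phi>'_def)
  ultimately have "solves_profile g (\<lambda>L. c + m * L ^ 3) \<phi> \<phi>' \<phi>''"
    unfolding solves_profile_def Let_def
    using profile_equation[OF p z fp] traction stretch_pos
    by (simp add: \<phi>_def \<phi>''_def less_imp_le)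
  then show ?thesis by blast
qed

lemma exists_profile_solution:
  assumes "\<kappa> > 0"
  shows "\<exists>\<mu>\<^sub>0>0. \<forall>\<mu>\<in>{-\<mu>\<^sub>0..\<mu>\<^sub>0}. \<exists>\<rho>>0. \<exists>\<phi> \<phi>' \<phi>''.
    solves_profile g (\<lambda>L. (\<kappa> * \<rho> + \<mu> * L ^ 3) * \<rho> powr (-1/3)) \<phi> \<phi>' \<phi>''"
proof -
  define \<mu>\<^sub>0 where "\<mu>\<^sub>0 = sqrt (1/\<kappa>) / 10"
  have "\<exists>\<rho>>0. \<exists>\<phi> \<phi>' \<phi>''. solves_profile g (\<lambda>L. (\<kappa> * \<rho> + \<mu> * L ^ 3) * \<rho> powr (-1/3)) \<phi> \<phi>' \<phi>''"
    if \<mu>: "\<bar>\<mu>\<bar> \<le> \<mu>\<^sub>0" for \<mu>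
  proof -
    define mf where "mf c = \<mu> / sqrt (c/\<kappa>)" for c
    have "continuous_on {1..3} mf"
      unfolding mf_def[abs_def] using assms by (intro continuous_intros) auto
    moreover have mf_bound: "\<bar>mf c\<bar> \<le> 1/10" if "c \<in> {1..3}" for c
    proof -
      have "\<bar>mf c\<bar> = \<bar>\<mu>\<bar> / sqrt (c/\<kappa>)" using that assms by (simp add: mf_def abs_divide)
      also have "\<dots> \<le> \<mu>\<^sub>0 / sqrt (1/\<kappa>)"
        using \<mu> that assms by (intro frac_le) (auto intro!: divide_right_mono)
      also have "\<dots> = 1/10" using assms by (simp add: \<mu>\<^sub>0_def)
      finally show ?thesis .
    qed
    ultimately obtain c where c: "c \<in> {1..3}"
      and traction: "g' (1 + apply_bcontfun (zfix c (mf c)) 1) = 0"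
      using shooting by blast
    have p: "admissible_params c (mf c)" using c mf_bound[OF c] by (simp add: admissible_params_def)
    obtain \<phi> \<phi>' \<phi>'' where "solves_profile g (\<lambda>L. c + mf c * L ^ 3) \<phi> \<phi>' \<phi>''"
      using profile_of_fixed_point[OF p admissible_zfix[OF p] zfix_eq_avg4[OF p] traction] by blast
    moreover have "(\<kappa> * sqrt (c/\<kappa>) ^ 3 + \<mu> * L ^ 3) * (sqrt (c/\<kappa>) ^ 3) powr (-1/3) = c + mf c * L ^ 3"
      for L
      unfolding mf_def using assms c by (intro rescaled_coefficient) auto
    ultimately show ?thesis using assms c by (intro exI[of _ "sqrt (c/\<kappa>) ^ 3"]) auto
  qed
  moreover have "\<mu>\<^sub>0 > 0" using assms by (simp add: \<mu>\<^sub>0_def)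
  ultimately show ?thesis by (intro exI[of _ \<mu>\<^sub>0]) (auto simp: abs_le_iff)
qed

end

lemma stiff_profile_of_C3:
  fixes g :: "real \<Rightarrow> real"
  assumes "g 1 = 1" "deriv g 1 = -1/3"
    and C3: "\<forall>y>0. g differentiable (at y) \<and> deriv g differentiable (at y)
                  \<and> (deriv ^^ 2) g differentiable (at y)"
    and cont: "continuous_on {0<..} ((deriv ^^ 3) g)"
    and large: "(deriv ^^ 2) g 1 \<ge> 50 * (50 + (SUP y\<in>{1/2..3/2}. \<bar>(deriv ^^ 3) g y\<bar>))"
  shows "stiff_profile g ((deriv ^^ 2) g 1) (SUP y\<in>{1/2..3/2}. \<bar>(deriv ^^ 3) g y\<bar>)"
proof
  have deriv_pow: "(deriv ^^ 2) g = deriv (deriv g)" "(deriv ^^ 3) g = deriv (deriv (deriv g))"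
    by (simp_all add: eval_nat_numeral)
  have "continuous_on {1/2..3/2} (\<lambda>y. \<bar>(deriv ^^ 3) g y\<bar>)"
    by (intro continuous_intros continuous_on_subset[OF cont]) auto
  then have bdd: "bdd_above ((\<lambda>y. \<bar>(deriv ^^ 3) g y\<bar>) ` {1/2..3/2})"
    by (intro bounded_imp_bdd_above compact_imp_bounded compact_continuous_image) auto
  show "\<bar>deriv (deriv (deriv g)) y\<bar> \<le> (SUP y\<in>{1/2..3/2}. \<bar>(deriv ^^ 3) g y\<bar>)" if "y \<in> {1/2..3/2}" for y
    using cSUP_upper[OF that bdd] by (simp add: deriv_pow)
  show "(g has_real_derivative deriv g y) (at y)"
    and "(deriv g has_real_derivative deriv (deriv g) y) (at y)"
    and "(deriv (deriv g) has_real_derivative deriv (deriv (deriv g)) y) (at y)" if "y > 0" for y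
    using C3 that by (auto simp: deriv_pow DERIV_deriv_iff_real_differentiable)
qed (use assms in \<open>simp_all add: eval_nat_numeral\<close>)

section \<open>The uniaxial profile of an objective, isotropic, homogeneous energy\<close>

lemma has_real_derivative_along_line:
  fixes f :: "'a::real_normed_vector \<Rightarrow> real"
  assumes "(f has_derivative L) (at x)"
  shows "((\<lambda>t. f (x + t *\<^sub>R v)) has_real_derivative L v) (at 0)"
proof -
  have "((\<lambda>t. x + t *\<^sub>R v) has_derivative (\<lambda>h. h *\<^sub>R v)) (at 0)"
    by (auto intro!: derivative_eq_intros)
  from diff_chain_at[OF this] assms
  have "((\<lambda>t. f (x + t *\<^sub>R v)) has_derivative (\<lambda>h. L (h *\<^sub>R v))) (at 0)"
    by (simp add: o_def)
  moreover have "L (h *\<^sub>R v) = L v * h" for h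
    using linear_scale[OF has_derivative_linear[OF assms]] by simp
  ultimately show ?thesis by (simp add: has_field_derivative_def mult_commute_abs)
qed

definition cyclic_perm :: "real^3^3" where
  "cyclic_perm = (\<chi> i j. if (i = 2 \<and> j = 1) \<or> (i = 3 \<and> j = 2) \<or> (i = 1 \<and> j = 3) then 1 else 0)"

lemma cyclic_perm_SO3: "cyclic_perm \<in> SO3"
proof -
  have "transpose cyclic_perm ** cyclic_perm = mat 1" "cyclic_perm ** transpose cyclic_perm = mat 1"
    by (simp_all add: vec_eq_iff matrix_matrix_mult_def transpose_def cyclic_perm_def mat_def
        forall_3 sum_3)
  moreover have "det cyclic_perm = 1" by (simp add: det_3 cyclic_perm_def)
  ultimately show ?thesis by (simp add: SO3_def orthogonal_matrix_def)
qed

lemma transpose_SO3: "Q \<in> SO3 \<Longrightarrow> transpose Q \<in> SO3"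
  by (simp add: SO3_def det_transpose orthogonal_matrix_transpose)

lemma cyclic_perm_conj_dyad_axis:
  "cyclic_perm ** (mat 1 + t *\<^sub>R dyad (axis 1 1)) ** transpose cyclic_perm
    = mat 1 + t *\<^sub>R dyad (axis 2 1)"
  "cyclic_perm ** (mat 1 + t *\<^sub>R dyad (axis 2 1)) ** transpose cyclic_perm
    = mat 1 + t *\<^sub>R dyad (axis 3 1)"
  by (simp_all add: vec_eq_iff matrix_matrix_mult_def transpose_def cyclic_perm_def dyad_def axis_def
      forall_3 sum_3 mat_def)

lemma sum_dyad_axis: "dyad (axis 1 1) + dyad (axis 2 1) + dyad (axis 3 1) = (mat 1 :: real^3^3)"
  by (simp add: vec_eq_iff dyad_def axis_def forall_3 mat_def)

lemma det_mat_1_plus_dyad_axis: "det (mat 1 + t *\<^sub>R dyad (axis k 1) :: real^3^3) = 1 + t"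
  using exhaust_3[of k] by (auto simp: det_3 dyad_def axis_def mat_def)

context
  fixes W :: "real^3^3 \<Rightarrow> real" and L :: "real^3^3 \<Rightarrow> real"
  assumes W_deriv: "(W has_derivative L) (at (mat 1))"
    and W_obj: "\<And>F Q. F \<in> GLp3 \<Longrightarrow> Q \<in> SO3 \<Longrightarrow> W (Q ** F) = W F"
    and W_iso: "\<And>F Q. F \<in> GLp3 \<Longrightarrow> Q \<in> SO3 \<Longrightarrow> W (F ** Q) = W F"
    and W_hom: "\<And>F \<sigma>. F \<in> GLp3 \<Longrightarrow> \<sigma> > 0 \<Longrightarrow> W (\<sigma> *\<^sub>R F) = W F / \<sigma>"
    and W_norm: "W (mat 1) = 1"
begin

lemma W_conj_SO3: "F \<in> GLp3 \<Longrightarrow> Q \<in> SO3 \<Longrightarrow> W (Q ** F ** transpose Q) = W F"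
  using W_obj W_iso transpose_SO3 by (simp add: GLp3_def SO3_def det_mul)

lemma deriv_eq_if_line_eq:
  assumes "\<And>t. t > -1 \<Longrightarrow> W (mat 1 + t *\<^sub>R B) = W (mat 1 + t *\<^sub>R B')"
  shows "L B = L B'"
proof -
  have "((\<lambda>t. W (mat 1 + t *\<^sub>R B')) has_real_derivative L B) (at 0)"
    by (rule has_field_derivative_transform_within_open[OF has_real_derivative_along_line[OF W_deriv],
          of "{-1<..}"]) (use assms in auto)
  from DERIV_unique[OF this has_real_derivative_along_line[OF W_deriv]] show ?thesis .
qed

lemma deriv_dyad_axis_eq:
  "L (dyad (axis 1 1)) = L (dyad (axis 2 1))" "L (dyad (axis 2 1)) = L (dyad (axis 3 1))"
proof -
  have conj: "W (mat 1 + t *\<^sub>R dyad (axis k 1))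
      = W (cyclic_perm ** (mat 1 + t *\<^sub>R dyad (axis k 1)) ** transpose cyclic_perm)" if "t > -1" for t k
    using W_conj_SO3[OF _ cyclic_perm_SO3] that by (simp add: GLp3_def det_mat_1_plus_dyad_axis)
  show "L (dyad (axis 1 1)) = L (dyad (axis 2 1))" "L (dyad (axis 2 1)) = L (dyad (axis 3 1))"
    using conj[of _ 1] conj[of _ 2]
    by (intro deriv_eq_if_line_eq; simp add: cyclic_perm_conj_dyad_axis)+
qed

lemma deriv_mat_1: "L (mat 1) = -1"
proof -
  have "((\<lambda>t. 1 / (1 + t)) has_real_derivative -1) (at (0::real))"
    by (auto intro!: derivative_eq_intros)
  then have "((\<lambda>t. W (mat 1 + t *\<^sub>R mat 1)) has_real_derivative -1) (at 0)"
  proof (rule has_field_derivative_transform_within_open[of _ _ _ "{-1<..}"])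
    fix t :: real assume "t \<in> {-1<..}"
    moreover have "mat 1 + t *\<^sub>R mat 1 = (1 + t) *\<^sub>R (mat 1 :: real^3^3)" by (simp add: scaleR_add_left)
    ultimately show "1 / (1 + t) = W (mat 1 + t *\<^sub>R mat 1)"
      using W_hom[of "mat 1" "1 + t"] W_norm by (simp add: GLp3_def)
  qed auto
  with has_real_derivative_along_line[OF W_deriv] show ?thesis by (rule DERIV_unique)
qed

lemma has_real_derivative_uniaxial_1: "(uniaxial W has_real_derivative -1/3) (at 1)"
proof -
  have "L (mat 1) = L (dyad (axis 1 1)) + L (dyad (axis 2 1)) + L (dyad (axis 3 1))"
    using linear_add[OF has_derivative_linear[OF W_deriv]] by (simp flip: sum_dyad_axis)
  then have "L (dyad (axis 1 1)) = -1/3" using deriv_mat_1 deriv_dyad_axis_eq by simp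
  moreover have "((\<lambda>t. W (mat 1 + t *\<^sub>R dyad (axis 1 1))) has_real_derivative L (dyad (axis 1 1)))
      (at (1 + -1))"
    using has_real_derivative_along_line[OF W_deriv] by simp
  then have "((\<lambda>y. W (mat 1 + (y + -1) *\<^sub>R dyad (axis 1 1))) has_real_derivative L (dyad (axis 1 1)))
      (at 1)"
    by (simp only: DERIV_shift)
  ultimately show ?thesis by (simp add: uniaxial_def[abs_def])
qed

end

theorem theorem1:
  fixes G :: real and W :: "real^3^3 \<Rightarrow> real" and g :: "real \<Rightarrow> real"
  assumes G_pos: "G > 0"
    and W_C1: "\<exists>W' :: ((real^3^3) \<Rightarrow> ((real^3^3) \<Rightarrow>\<^sub>L real)).
                 continuous_on GLp3 W' \<and> (\<forall>F\<in>GLp3. (W has_derivative blinfun_apply (W' F)) (at F))"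
    and W_obj: "\<And>F Q. F \<in> GLp3 \<Longrightarrow> Q \<in> SO3 \<Longrightarrow> W (Q ** F) = W F"
    and W_iso: "\<And>F Q. F \<in> GLp3 \<Longrightarrow> Q \<in> SO3 \<Longrightarrow> W (F ** Q) = W F"
    and W_hom: "\<And>F \<sigma>. F \<in> GLp3 \<Longrightarrow> \<sigma> > 0 \<Longrightarrow> W (\<sigma> *\<^sub>R F) = W F / \<sigma>"
    and W_norm: "W (mat 1) = 1"
    and g_def: "\<And>y. y > 0 \<Longrightarrow> g y = uniaxial W y"
    and g_C3: "\<forall>y>0. g differentiable (at y) \<and> deriv g differentiable (at y)
                      \<and> (deriv ^^ 2) g differentiable (at y)"
    and g3_cont: "continuous_on {0<..} ((deriv ^^ 3) g)"
    and g_cond: "(deriv ^^ 2) g 1 \<ge> 50 * (50 + (SUP y\<in>{1/2..3/2}. \<bar>(deriv ^^ 3) g y\<bar>))"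
  shows "\<exists>\<mu>0>0. \<forall>\<mu>\<in>{-\<mu>0..\<mu>0}. \<exists>\<rho>>0. \<exists>\<phi> \<phi>' \<phi>'' :: real \<Rightarrow> real.
           (\<forall>R\<in>{0..1}. \<phi> R \<ge> 0)
         \<and> (\<forall>R\<in>{0..1}. (\<phi> has_real_derivative \<phi>' R) (at R within {0..1}))
         \<and> (\<forall>R\<in>{0..1}. (\<phi>' has_real_derivative \<phi>'' R) (at R within {0..1}))
         \<and> \<phi> 0 = 0 \<and> \<phi>'' 0 = 0
         \<and> (\<forall>R\<in>{0..1}. \<phi>' R > 0)
         \<and> (let lam = (\<lambda>R. if R = 0 then \<phi>' 0 else \<phi> R / R);
                yy = (\<lambda>R. \<phi>' R / lam R)
            in (\<forall>R\<in>{0<..1}. \<exists>D.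
                  ((\<lambda>r. r ^ 4 / \<phi> r * deriv g (yy r)) has_real_derivative D) (at R within {0..1})
                \<and> (\<phi> R)\<^sup>2 / R ^ 5 * D + \<phi> R / R\<^sup>2 * g (yy R)
                    = (4 * pi / 3 * G * \<rho> + \<mu> * (lam R) ^ 3) * \<rho> powr (-1/3) * \<phi> R)
               \<and> deriv g (yy 1) = 0)
         \<and> \<phi> 1 = 1"
proof -
  obtain W' where "(W has_derivative blinfun_apply W') (at (mat 1))"
    using W_C1 by (force simp: GLp3_def)
  then have "(uniaxial W has_real_derivative -1/3) (at 1)"
    using W_obj W_iso W_hom W_norm by (rule has_real_derivative_uniaxial_1)
  then have "(g has_real_derivative -1/3) (at 1)"
    by (rule has_field_derivative_transform_within_open[of _ _ _ "{0<..}"]) (auto simp: g_def)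
  moreover have "g 1 = 1" using g_def[of 1] W_norm by (simp add: uniaxial_def)
  ultimately interpret stiff_profile g "(deriv ^^ 2) g 1" "SUP y\<in>{1/2..3/2}. \<bar>(deriv ^^ 3) g y\<bar>"
    using g_C3 g3_cont g_cond by (intro stiff_profile_of_C3) (auto dest: DERIV_imp_deriv)
  have "4 * pi / 3 * G > 0" using G_pos by simp
  from exists_profile_solution[OF this] show ?thesis unfolding solves_profile_def .
qed

end
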